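(* Let $G$ be finite and $z\in\mathbb C\setminus\{0\}$. The restriction homomorphism $\mathrm{Res}:\mathrm{FA}(P)\to\mathrm{FA}(\partial\mathbb T)$ restricts to a linear isomorphism from $\{\mu\in\mathrm{FA}(P):\mathcal T'\mu=z\mu\}$ onto $\mathrm{FA}(\partial\mathbb T)^{\Gamma,z}:=\{\nu\in\mathrm{FA}(\partial\mathbb T):\pi_z(\gamma)\nu=\nu\ \text{for all }\gamma\in\Gamma\}$.
   Context: $G$ is a finite connected graph with vertex set $V$ (no loops, no multiple edges, every vertex of degree $\ge2$); $E$ oriented edges, $\iota,\tau$, opposite $\bar e$; turn $e\rightsquigarrow e'$ iff $\tau(e)=\iota(e')$, $e'\ne\bar e$. $P$ = infinite paths $(e_1,e_2,\dots)$ with $e_i\rightsquigarrow e_{i+1}$; $(\mathcal Tf)(e_1,\dots)=\sum_{e_0\rightsquigarrow e_1}f(e_0,e_1,\dots)$. Postal codes: finite paths $c=(c_1,\dots,c_m)$, $m\ge1$, $c_i\rightsquigarrow c_{i+1}$; $\mathcal C$ their set; $\mathbf 1_c$ indicator of the district $P_c$ of paths beginning with $c$. $\mathrm{FA}(P)=\{\mu:\mathcal C\to\mathbb C:\mu(c)=\sum_{e:c_m\rightsquigarrow e}\mu(c,e)\}$; for $f$ constant on districts of length $m$, $\langle f,\mu\rangle=\sum_{|c|=m}f(c)\mu(c)$; $(\mathcal T'\mu)(c)=\langle\mathcal T\mathbf 1_c,\mu\rangle$. Universal cover: fix $v_0\in V$; $\mathbb T$ is the tree whose vertices are the non-backtracking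 finite edge paths in $G$ starting at $v_0$ (including the empty path $o$, the base vertex), a path being adjacent to its one-edge extensions; the covering map sends a path to its terminal vertex; $\Gamma=\pi_1(G,v_0)$ acts on $\mathbb T$ by deck transformations. The ends $\partial\mathbb T$ are identified with $P_{v_0}=\{p\in P:\iota(e_1)=v_0\}$; under this identification the forward set of the edge from vertex $c$ to vertex $(c,e)$ is the district $P_{(c,e)}$, and the clopen sets of $\partial\mathbb T$ are the finite disjoint unions of districts $P_c$ with $c$ starting at $v_0$. $\mathrm{FA}(\partial\mathbb T)$ = finitely additive complex set functions on clopen subsets of $\partial\mathbb T$. $\mathrm{Res}\,\mu$ is defined by $(\mathrm{Res}\,\mu)(P_c)=\mu(c)$ for postal codes $c$ starting at $v_0$. With $d$ the tree metric and $h_\omega(x,y)=d(x,w)-d(y,w)$ ($w$ on both rays from $x,y$ to $\omega$): $(\gamma\nu)(A)=\nu(\gamma^{-1}A)$ and $(\pi_z(\gamma)\nu)(A)=\int_Ac_\gamma\,d(\gamma\nu)$ with locally constant $c_\gamma(\omega)=z^{h_\omega(\gamma o,o)}$, integrals of locally constant functions being finite sums over clopen partitions. *)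

theory Defs
  imports Complex_Main
begin

text \<open>The graph is given by a vertex set V and a symmetric irreflexive adjacency relation adj.
  Oriented edges are pairs (u,v) with adj u v; iota = fst, tau = snd.\<close>

definition edges :: "('v \<Rightarrow> 'v \<Rightarrow> bool) \<Rightarrow> ('v \<times> 'v) set" where
  "edges adj = {(u, v). adj u v}"

definition rev_edge :: "'v \<times> 'v \<Rightarrow> 'v \<times> 'v" where
  "rev_edge e = (snd e, fst e)"

definition turn :: "('v \<Rightarrow> 'v \<Rightarrow> bool) \<Rightarrow> 'v \<times> 'v \<Rightarrow> 'v \<times> 'v \<Rightarrow> bool" where
  "turn adj e e' \<longleftrightarrow> e \<in> edges adj \<and> e' \<in> edges adj \<and> snd e = fst e' \<and> e' \<noteq> rev_edge e"

definition paths :: "('v \<Rightarrow> 'v \<Rightarrow> bool) \<Rightarrow> (nat \<Rightarrow> 'v \<times> 'v) set" where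
  "paths adj = {p. \<forall>i. turn adj (p i) (p (Suc i))}"

definition codes :: "('v \<Rightarrow> 'v \<Rightarrow> bool) \<Rightarrow> ('v \<times> 'v) list set" where
  "codes adj = {c. c \<noteq> [] \<and> hd c \<in> edges adj \<and>
                   (\<forall>i. Suc i < length c \<longrightarrow> turn adj (c ! i) (c ! Suc i))}"

definition district :: "('v \<Rightarrow> 'v \<Rightarrow> bool) \<Rightarrow> ('v \<times> 'v) list \<Rightarrow> (nat \<Rightarrow> 'v \<times> 'v) set" where
  "district adj c = {p \<in> paths adj. \<forall>i < length c. p i = c ! i}"

definition indic :: "('v \<Rightarrow> 'v \<Rightarrow> bool) \<Rightarrow> ('v \<times> 'v) list \<Rightarrow> (nat \<Rightarrow> 'v \<times> 'v) \<Rightarrow> complex" where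
  "indic adj c = (\<lambda>p. if p \<in> district adj c then 1 else 0)"

text \<open>Elements of FA(P) are represented as functions on lists of edges that vanish off the
  set of postal codes (so that FA(P) is literally a space of functions on postal codes).\<close>

definition FA_P :: "('v \<Rightarrow> 'v \<Rightarrow> bool) \<Rightarrow> (('v \<times> 'v) list \<Rightarrow> complex) set" where
  "FA_P adj = {\<mu>. (\<forall>c. c \<notin> codes adj \<longrightarrow> \<mu> c = 0) \<and>
     (\<forall>c \<in> codes adj. \<mu> c = (\<Sum>e\<in>{e. turn adj (last c) e}. \<mu> (c @ [e])))}"

definition transfer :: "('v \<Rightarrow> 'v \<Rightarrow> bool) \<Rightarrow> ((nat \<Rightarrow> 'v \<times> 'v) \<Rightarrow> complex) \<Rightarrow>
    (nat \<Rightarrow> 'v \<times> 'v) \<Rightarrow> complex" where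
  "transfer adj f p = (\<Sum>e0\<in>{e. turn adj e (p 0)}. f (case_nat e0 p))"

definition const_on_districts :: "('v \<Rightarrow> 'v \<Rightarrow> bool) \<Rightarrow> nat \<Rightarrow> ((nat \<Rightarrow> 'v \<times> 'v) \<Rightarrow> complex) \<Rightarrow> bool" where
  "const_on_districts adj m f \<longleftrightarrow>
     (\<forall>c \<in> codes adj. length c = m \<longrightarrow> (\<forall>p \<in> district adj c. \<forall>q \<in> district adj c. f p = f q))"

definition pairing :: "('v \<Rightarrow> 'v \<Rightarrow> bool) \<Rightarrow> ((nat \<Rightarrow> 'v \<times> 'v) \<Rightarrow> complex) \<Rightarrow>
    (('v \<times> 'v) list \<Rightarrow> complex) \<Rightarrow> complex" where
  "pairing adj f \<mu> = (let m = (LEAST m. 1 \<le> m \<and> const_on_districts adj m f) in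
      \<Sum>c\<in>{c \<in> codes adj. length c = m}. f (SOME p. p \<in> district adj c) * \<mu> c)"

definition transfer_dual :: "('v \<Rightarrow> 'v \<Rightarrow> bool) \<Rightarrow> (('v \<times> 'v) list \<Rightarrow> complex) \<Rightarrow>
    ('v \<times> 'v) list \<Rightarrow> complex" where
  "transfer_dual adj \<mu> c = (if c \<in> codes adj then pairing adj (transfer adj (indic adj c)) \<mu> else 0)"

definition eigenspace_P :: "('v \<Rightarrow> 'v \<Rightarrow> bool) \<Rightarrow> complex \<Rightarrow> (('v \<times> 'v) list \<Rightarrow> complex) set" where
  "eigenspace_P adj z = {\<mu> \<in> FA_P adj. transfer_dual adj \<mu> = (\<lambda>c. z * \<mu> c)}"

definition bd :: "('v \<Rightarrow> 'v \<Rightarrow> bool) \<Rightarrow> 'v \<Rightarrow> (nat \<Rightarrow> 'v \<times> 'v) set" where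
  "bd adj v0 = {p \<in> paths adj. fst (p 0) = v0}"

definition clopen_bd :: "('v \<Rightarrow> 'v \<Rightarrow> bool) \<Rightarrow> 'v \<Rightarrow> (nat \<Rightarrow> 'v \<times> 'v) set \<Rightarrow> bool" where
  "clopen_bd adj v0 A \<longleftrightarrow> (\<exists>D. finite D \<and> (\<forall>c\<in>D. c \<in> codes adj \<and> fst (hd c) = v0) \<and>
      (\<forall>c\<in>D. \<forall>c'\<in>D. c \<noteq> c' \<longrightarrow> district adj c \<inter> district adj c' = {}) \<and>
      A = \<Union>(district adj ` D))"

text \<open>Finitely additive set functions on clopen sets, represented as functions on all sets of
  paths vanishing off the clopen sets.\<close>
definition FA_bd :: "('v \<Rightarrow> 'v \<Rightarrow> bool) \<Rightarrow> 'v \<Rightarrow> ((nat \<Rightarrow> 'v \<times> 'v) set \<Rightarrow> complex) set" where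
  "FA_bd adj v0 = {\<nu>. (\<forall>A. \<not> clopen_bd adj v0 A \<longrightarrow> \<nu> A = 0) \<and>
     (\<forall>A B. clopen_bd adj v0 A \<longrightarrow> clopen_bd adj v0 B \<longrightarrow> A \<inter> B = {} \<longrightarrow> \<nu> (A \<union> B) = \<nu> A + \<nu> B)}"

definition Res :: "('v \<Rightarrow> 'v \<Rightarrow> bool) \<Rightarrow> 'v \<Rightarrow> (('v \<times> 'v) list \<Rightarrow> complex) \<Rightarrow>
    ((nat \<Rightarrow> 'v \<times> 'v) set \<Rightarrow> complex)" where
  "Res adj v0 \<mu> = (THE \<nu>. \<nu> \<in> FA_bd adj v0 \<and>
      (\<forall>c \<in> codes adj. fst (hd c) = v0 \<longrightarrow> \<nu> (district adj c) = \<mu> c))"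

definition tree_verts :: "('v \<Rightarrow> 'v \<Rightarrow> bool) \<Rightarrow> 'v \<Rightarrow> ('v \<times> 'v) list set" where
  "tree_verts adj v0 = {[]} \<union> {c \<in> codes adj. fst (hd c) = v0}"

fun red :: "('v \<times> 'v) list \<Rightarrow> ('v \<times> 'v) list" where
  "red [] = []"
| "red (e # xs) = (case red xs of [] \<Rightarrow> [e] | f # ys \<Rightarrow> (if f = rev_edge e then ys else e # f # ys))"

text \<open>pi_1(G,v0) as the reduced (non-backtracking) closed edge paths at v0.\<close>
definition Gamma :: "('v \<Rightarrow> 'v \<Rightarrow> bool) \<Rightarrow> 'v \<Rightarrow> ('v \<times> 'v) list set" where
  "Gamma adj v0 = {g \<in> tree_verts adj v0. g = [] \<or> snd (last g) = v0}"

text \<open>Deck transformation of g on tree vertices: reduced concatenation.\<close>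
definition deck_act :: "('v \<times> 'v) list \<Rightarrow> ('v \<times> 'v) list \<Rightarrow> ('v \<times> 'v) list" where
  "deck_act g x = red (g @ x)"

definition pref :: "(nat \<Rightarrow> 'a) \<Rightarrow> nat \<Rightarrow> 'a list" where
  "pref \<omega> n = map \<omega> [0..<n]"

definition lcp :: "'a list \<Rightarrow> 'a list \<Rightarrow> nat" where
  "lcp x y = length (takeWhile (\<lambda>(a, b). a = b) (zip x y))"

text \<open>Extension of the deck action to the ends (= reduced concatenation with an infinite path).\<close>
definition bd_act :: "('v \<times> 'v) list \<Rightarrow> (nat \<Rightarrow> 'v \<times> 'v) \<Rightarrow> (nat \<Rightarrow> 'v \<times> 'v)" where
  "bd_act g \<omega> = (let k = lcp (rev (map rev_edge g)) (pref \<omega> (length g)) in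
      (\<lambda>i. if i < length g - k then g ! i else \<omega> (i - (length g - k) + k)))"

definition tdist :: "'a list \<Rightarrow> 'a list \<Rightarrow> int" where
  "tdist x y = int (length x) + int (length y) - 2 * int (lcp x y)"

text \<open>Vertices on the geodesic ray from tree vertex x to the end omega.\<close>
definition ray :: "'a list \<Rightarrow> (nat \<Rightarrow> 'a) \<Rightarrow> 'a list set" where
  "ray x \<omega> = (let k = lcp x (pref \<omega> (length x)) in
      {take i x | i. k \<le> i \<and> i \<le> length x} \<union> {pref \<omega> n | n. k \<le> n})"

text \<open>Horofunction h_omega(x,y) = d(x,w) - d(y,w), w on both rays to omega.\<close>
definition horo :: "(nat \<Rightarrow> 'a) \<Rightarrow> 'a list \<Rightarrow> 'a list \<Rightarrow> int" where
  "horo \<omega> x y = (let w = (SOME w. w \<in> ray x \<omega> \<inter> ray y \<omega>) in tdist x w - tdist y w)"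

definition fa_push :: "('v \<Rightarrow> 'v \<Rightarrow> bool) \<Rightarrow> 'v \<Rightarrow> ('v \<times> 'v) list \<Rightarrow>
    ((nat \<Rightarrow> 'v \<times> 'v) set \<Rightarrow> complex) \<Rightarrow> ((nat \<Rightarrow> 'v \<times> 'v) set \<Rightarrow> complex)" where
  "fa_push adj v0 g \<nu> A = (if clopen_bd adj v0 A then \<nu> {\<omega> \<in> bd adj v0. bd_act g \<omega> \<in> A} else 0)"

text \<open>Integral of a locally constant function over a clopen set: finite sum over a clopen
  partition of A on whose pieces f is constant.\<close>
definition fa_int :: "('v \<Rightarrow> 'v \<Rightarrow> bool) \<Rightarrow> 'v \<Rightarrow> ((nat \<Rightarrow> 'v \<times> 'v) set \<Rightarrow> complex) \<Rightarrow>
    ((nat \<Rightarrow> 'v \<times> 'v) \<Rightarrow> complex) \<Rightarrow> (nat \<Rightarrow> 'v \<times> 'v) set \<Rightarrow> complex" where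
  "fa_int adj v0 m f A = (SOME s. \<exists>Q. finite Q \<and> (\<forall>B\<in>Q. clopen_bd adj v0 B \<and> B \<noteq> {}) \<and>
      (\<forall>B\<in>Q. \<forall>B'\<in>Q. B \<noteq> B' \<longrightarrow> B \<inter> B' = {}) \<and> \<Union>Q = A \<and>
      (\<forall>B\<in>Q. \<forall>x\<in>B. \<forall>y\<in>B. f x = f y) \<and>
      s = (\<Sum>B\<in>Q. f (SOME x. x \<in> B) * m B))"

definition cocycle :: "complex \<Rightarrow> ('v \<times> 'v) list \<Rightarrow> (nat \<Rightarrow> 'v \<times> 'v) \<Rightarrow> complex" where
  "cocycle z g \<omega> = z powi horo \<omega> (deck_act g []) []"

definition pi_z :: "('v \<Rightarrow> 'v \<Rightarrow> bool) \<Rightarrow> 'v \<Rightarrow> complex \<Rightarrow> ('v \<times> 'v) list \<Rightarrow>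
    ((nat \<Rightarrow> 'v \<times> 'v) set \<Rightarrow> complex) \<Rightarrow> ((nat \<Rightarrow> 'v \<times> 'v) set \<Rightarrow> complex)" where
  "pi_z adj v0 z g \<nu> A = (if clopen_bd adj v0 A then fa_int adj v0 (fa_push adj v0 g \<nu>) (cocycle z g) A else 0)"

definition FA_bd_inv :: "('v \<Rightarrow> 'v \<Rightarrow> bool) \<Rightarrow> 'v \<Rightarrow> complex \<Rightarrow> ((nat \<Rightarrow> 'v \<times> 'v) set \<Rightarrow> complex) set" where
  "FA_bd_inv adj v0 z = {\<nu> \<in> FA_bd adj v0. \<forall>g \<in> Gamma adj v0. pi_z adj v0 z g \<nu> = \<nu>}"

end

theory Submission
  imports Defs
begin

text \<open>An eigenmeasure \<open>\<mu>\<close> of \<open>\<T>'\<close> with eigenvalue \<open>z\<close> satisfies \<open>\<mu>(tl c) = z \<mu>(c)\<close>, so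
  it is determined by its values on the postal codes starting at \<open>v\<^sub>0\<close>, that is by its
  restriction to the boundary of the tree. A deck transformation \<open>g\<close> maps the district of
  the reduced word \<open>g\<^sup>-\<^sup>1x\<close> onto the district of \<open>x\<close>, and the eigen relation rescales the
  mass by \<open>z\<close> raised to the horofunction, which is exactly the cocycle of \<open>\<pi>\<^sub>z\<close>; hence the
  restriction is \<open>\<pi>\<^sub>z\<close>-invariant. Conversely an invariant \<open>\<nu>\<close> lifts to
  \<open>\<mu>(c) = z\<^bsup>|d|\<^esup> \<nu>(P\<^sub>d\<^sub>c)\<close> for any \<open>d\<close> such that \<open>d c\<close> starts at \<open>v\<^sub>0\<close>; such \<open>d\<close> exist
  because \<open>G\<close> is connected of minimal degree 2, and the value does not depend on \<open>d\<close> by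
  invariance under the loop \<open>d\<^sub>2 d\<^sub>1\<^sup>-\<^sup>1\<close>.\<close>

definition path_inv :: "('v \<times> 'v) list \<Rightarrow> ('v \<times> 'v) list" where
  "path_inv d = rev (map rev_edge d)"

lemma rev_edge_rev_edge[simp]: "rev_edge (rev_edge e) = e"
  by (simp add: rev_edge_def)

lemma rev_edge_fst [simp]: "fst (rev_edge e) = snd e"
  and rev_edge_snd [simp]: "snd (rev_edge e) = fst e"
  by (auto simp: rev_edge_def)

lemma path_inv_length[simp]: "length (path_inv d) = length d" by (simp add: path_inv_def)
lemma path_inv_path_inv[simp]: "path_inv (path_inv d) = d"
  by (simp add: path_inv_def rev_map comp_def)
lemma path_inv_append: "path_inv (a @ b) = path_inv b @ path_inv a" by (simp add: path_inv_def)
lemma path_inv_nth: "i < length d \<Longrightarrow> path_inv d ! i = rev_edge (d ! (length d - Suc i))"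
  by (simp add: path_inv_def rev_nth)
lemma path_inv_Nil[simp]: "path_inv [] = []" by (simp add: path_inv_def)

lemma lcp_Nil [simp]: "lcp [] ys = 0" "lcp xs [] = 0"
  by (simp_all add: lcp_def)

lemma lcp_Cons_Cons [simp]: "lcp (x # xs) (y # ys) = (if x = y then Suc (lcp xs ys) else 0)"
  by (simp add: lcp_def)

lemma lcp_le_length: "lcp xs ys \<le> length xs" "lcp xs ys \<le> length ys"
  by (induction xs ys rule: list_induct2') auto

lemma nth_less_lcp: "i < lcp xs ys \<Longrightarrow> xs ! i = ys ! i"
proof (induction xs ys arbitrary: i rule: list_induct2')
  case (4 x xs y ys) then show ?case by (cases i) (auto split: if_splits)
qed auto

lemma nth_lcp_neq: "lcp xs ys < length xs \<Longrightarrow> lcp xs ys < length ys \<Longrightarrow> xs ! lcp xs ys \<noteq> ys ! lcp xs ys"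
  by (induction xs ys rule: list_induct2') auto

lemma lcp_eqI:
  assumes "k \<le> length xs" "k \<le> length ys" "\<And>i. i < k \<Longrightarrow> xs ! i = ys ! i"
    and "k < length xs \<Longrightarrow> k < length ys \<Longrightarrow> xs ! k \<noteq> ys ! k"
  shows "lcp xs ys = k"
  using assms
proof (induction xs ys arbitrary: k rule: list_induct2')
  case (4 x xs y ys)
  show ?case
  proof (cases k)
    case (Suc k')
    have "x = y" using "4.prems"(3)[of 0] Suc by auto
    moreover have "lcp xs ys = k'"
    proof (rule "4.IH")
      show "xs ! i = ys ! i" if "i < k'" for i using "4.prems"(3)[of "Suc i"] that Suc by simp
    qed (use "4.prems" Suc in auto)
    ultimately show ?thesis using Suc by simp
  qed (use "4.prems" in auto)
qed auto

lemma pref_nth[simp]: "i < n \<Longrightarrow> pref p n ! i = p i" by (simp add: pref_def)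
lemma pref_length[simp]: "length (pref p n) = n" by (simp add: pref_def)

lemma pref_0 [simp]: "pref p 0 = []" by (simp add: pref_def)

lemma pref_Suc_case_nat: "pref (case_nat e p) (Suc n) = e # pref p n"
  by (simp add: pref_def map_upt_Suc del: upt_Suc)

lemma pref_take: "m \<le> n \<Longrightarrow> take m (pref p n) = pref p m"
  by (simp add: pref_def take_map)

lemma lcp_take: "lcp xs (take m ys) = min m (lcp xs ys)"
proof (induction xs ys arbitrary: m rule: list_induct2')
  case (4 x xs y ys) then show ?case by (cases m) auto
qed auto

lemma lcp_pref_eq:
  assumes "lcp xs (pref \<omega> (length xs)) \<le> m"
  shows "lcp xs (pref \<omega> m) = lcp xs (pref \<omega> (length xs))"
proof (cases "m \<le> length xs")
  case True
  then show ?thesis using lcp_take[of xs m "pref \<omega> (length xs)"] assms by (simp add: pref_take)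
next
  case False
  then show ?thesis using lcp_take[of xs "length xs" "pref \<omega> m"] lcp_le_length(1)[of xs "pref \<omega> m"]
    by (simp add: pref_take)
qed

lemma ray_Nil: "ray [] \<omega> = range (pref \<omega>)"
  by (auto simp: ray_def Let_def pref_def)

lemma ray_inter_Nil: "ray xs \<omega> \<inter> ray [] \<omega> = {pref \<omega> m | m. lcp xs (pref \<omega> (length xs)) \<le> m}"
  (is "_ = ?R")
proof
  let ?k = "lcp xs (pref \<omega> (length xs))"
  show "?R \<subseteq> ray xs \<omega> \<inter> ray [] \<omega>" by (auto simp: ray_def Let_def ray_Nil)
  show "ray xs \<omega> \<inter> ray [] \<omega> \<subseteq> ?R"
  proof
    fix w assume "w \<in> ray xs \<omega> \<inter> ray [] \<omega>"
    then have w: "w \<in> ray xs \<omega>" "w \<in> ray [] \<omega>" by auto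
    then obtain m where m: "w = pref \<omega> m" by (auto simp: ray_Nil)
    have "?k \<le> m"
    proof (cases "w \<in> {pref \<omega> n | n. ?k \<le> n}")
      case False
      then obtain i where "w = take i xs" "?k \<le> i" "i \<le> length xs"
        using w(1) by (auto simp: ray_def Let_def)
      then show ?thesis using m by (metis length_take min.absorb2 pref_length)
    qed (use m in \<open>auto dest: arg_cong[of _ _ length]\<close>)
    then show "w \<in> ?R" using m by blast
  qed
qed

lemma horo_Nil: "horo \<omega> xs [] = int (length xs) - 2 * int (lcp xs (pref \<omega> (length xs)))"
proof -
  let ?k = "lcp xs (pref \<omega> (length xs))"
  let ?w = "SOME w. w \<in> ray xs \<omega> \<inter> ray [] \<omega>"
  have "?w \<in> ray xs \<omega> \<inter> ray [] \<omega>"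
    by (rule someI[of _ "pref \<omega> (length xs)"]) (auto simp: ray_inter_Nil lcp_le_length)
  then obtain m where m: "?w = pref \<omega> m" "?k \<le> m" by (auto simp: ray_inter_Nil)
  then show ?thesis by (simp add: horo_def tdist_def lcp_pref_eq)
qed

text \<open>The reduced form of the word \<open>g\<^sup>-\<^sup>1x\<close>.\<close>
definition deck_pre_code :: "('v \<times> 'v) list \<Rightarrow> ('v \<times> 'v) list \<Rightarrow> ('v \<times> 'v) list" where
  "deck_pre_code g x = path_inv (drop (lcp g x) g) @ drop (lcp g x) x"

lemma lcp_code_props: assumes "length g < length x"
  shows "lcp g x \<le> length g" "\<And>i. i < lcp g x \<Longrightarrow> g ! i = x ! i"
    "lcp g x < length g \<Longrightarrow> g ! lcp g x \<noteq> x ! lcp g x"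
  using lcp_le_length[of g x] nth_less_lcp[of _ g x] nth_lcp_neq[of g x] assms by auto

lemma path_inv_split: assumes "j \<le> length g" "i < length g - j"
  shows "path_inv g ! i = path_inv (drop j g) ! i"
proof -
  have "path_inv g = path_inv (drop j g) @ path_inv (take j g)"
    by (metis append_take_drop_id path_inv_append)
  then show ?thesis using assms by (simp add: nth_append)
qed

lemma length_deck_pre_code: "length (deck_pre_code g x) = (length g - lcp g x) + (length x - lcp g x)"
  by (simp add: deck_pre_code_def)

lemma deck_pre_code_nth_inv: assumes "length g < length x" "i < length g - lcp g x"
  shows "deck_pre_code g x ! i = path_inv g ! i"
  using assms path_inv_split[of "lcp g x" g i] lcp_code_props[OF assms(1)]
    by (simp add: deck_pre_code_def nth_append)

lemma deck_pre_code_nth_code: assumes "length g < length x" "length g - lcp g x \<le> i"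
  shows "deck_pre_code g x ! i = x ! (lcp g x + (i - (length g - lcp g x)))"
  using assms lcp_code_props[OF assms(1)] by (simp add: deck_pre_code_def nth_append)

lemma bd_act_eq:
  "bd_act g \<omega> = (\<lambda>i. if i < length g - lcp (path_inv g) (pref \<omega> (length g)) then g ! i
    else \<omega> (i - (length g - lcp (path_inv g) (pref \<omega> (length g))) + lcp (path_inv g) (pref \<omega> (length g))))"
  by (simp only: bd_act_def Let_def path_inv_def)

lemma power_int_diff_twice: assumes "(z::'a::field) \<noteq> 0" "j \<le> n"
  shows "z powi (int n - 2 * int j) = z ^ (n - j) / z ^ j"
proof -
  have e: "int n - 2 * int j = int (n - j) - int j" using assms(2) by (simp add: of_nat_diff)
  have "z powi (int (n - j) - int j) = z powi (int (n - j)) / z powi (int j)"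
    by (rule power_int_diff) (use assms(1) in simp)
  then show ?thesis unfolding e power_int_of_nat .
qed

locale based_graph =
  fixes V :: "'v set" and adj :: "'v \<Rightarrow> 'v \<Rightarrow> bool" and v0 :: 'v
  assumes finite_V: "finite V"
    and adj_in_V: "\<forall>u v. adj u v \<longrightarrow> u \<in> V \<and> v \<in> V"
    and adj_sym: "\<forall>u v. adj u v \<longrightarrow> adj v u"
    and connected: "\<forall>u\<in>V. \<forall>v\<in>V. (u, v) \<in> {(a, b). adj a b}\<^sup>*"
    and degree_ge_2: "\<forall>v\<in>V. card {w. adj v w} \<ge> 2"
    and v0_in_V: "v0 \<in> V"
begin

abbreviation "E \<equiv> edges adj"
abbreviation "C \<equiv> codes adj"
abbreviation "P \<equiv> district adj"
abbreviation "trn \<equiv> turn adj"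

lemma edges_iff: "e \<in> E \<longleftrightarrow> adj (fst e) (snd e)" by (cases e) (auto simp: edges_def)

lemma finite_edges: "finite E"
proof -
  have "E \<subseteq> V \<times> V" using adj_in_V by (auto simp: edges_def)
  then show ?thesis using finite_V finite_subset by blast
qed

lemma edges_vertices: "e \<in> E \<Longrightarrow> fst e \<in> V \<and> snd e \<in> V" using adj_in_V by (auto simp: edges_iff)

lemma rev_edge_edges: "e \<in> E \<Longrightarrow> rev_edge e \<in> E" using adj_sym by (auto simp: edges_iff)

lemma turn_edges: "trn a b \<Longrightarrow> a \<in> E \<and> b \<in> E" by (simp add: turn_def)

lemma turn_rev: assumes "trn a b" shows "trn (rev_edge b) (rev_edge a)"
proof -
  have "a \<in> E" "b \<in> E" "snd a = fst b" "b \<noteq> rev_edge a" using assms by (auto simp: turn_def)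
  then show ?thesis using rev_edge_edges unfolding turn_def
    by (metis rev_edge_fst rev_edge_rev_edge rev_edge_snd)
qed

lemma turn_exists: assumes "e \<in> E" shows "\<exists>e'. trn e e'"
proof -
  let ?v = "snd e"
  have "?v \<in> V" using edges_vertices assms by auto
  then have c: "card {w. adj ?v w} \<ge> 2" using degree_ge_2 by auto
  have "\<exists>w. adj ?v w \<and> w \<noteq> fst e"
  proof (rule ccontr)
    assume "\<not> ?thesis"
    then have "{w. adj ?v w} \<subseteq> {fst e}" by auto
    then have "card {w. adj ?v w} \<le> 1" using card_mono[of "{fst e}"] by fastforce
    then show False using c by auto
  qed
  then obtain w where w: "adj ?v w" "w \<noteq> fst e" by auto
  have "trn e (?v, w)" using w assms by (auto simp: turn_def edges_def rev_edge_def)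
  then show ?thesis by blast
qed

lemma codes_turn: "c \<in> C \<Longrightarrow> Suc i < length c \<Longrightarrow> trn (c!i) (c!Suc i)"
  by (simp add: codes_def)

lemma codes_adjacent: "c \<in> C \<Longrightarrow> Suc i < length c \<Longrightarrow> snd (c ! i) = fst (c ! Suc i)"
  using codes_turn by (simp add: turn_def)

lemma codes_nth_edge: assumes "c \<in> C" "i < length c" shows "c ! i \<in> E"
proof (cases i)
  case 0 then show ?thesis using assms by (cases c) (auto simp: codes_def)
next
  case (Suc j) then show ?thesis using codes_turn[OF assms(1), of j] assms turn_edges by auto
qed

lemma codes_iff_nth:
  "c \<in> C \<longleftrightarrow> c \<noteq> [] \<and> (\<forall>i<length c. c ! i \<in> E) \<and> (\<forall>i. Suc i < length c \<longrightarrow> trn (c!i) (c!Suc i))"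
  using codes_nth_edge by (auto simp: codes_def hd_conv_nth)

lemma codes_single [simp]: "[e] \<in> C \<longleftrightarrow> e \<in> E" by (simp add: codes_def)

lemma codes_drop: assumes "c \<in> C" "k < length c" shows "drop k c \<in> C"
  using assms unfolding codes_iff_nth by (auto simp: add.commute[of k])

lemma codes_take: assumes "c \<in> C" "0 < k" shows "take k c \<in> C"
  using assms unfolding codes_iff_nth by auto

lemma codes_tl: assumes "c \<in> C" "2 \<le> length c" shows "tl c \<in> C"
  using codes_drop[OF assms(1), of 1] assms by (simp add: drop_Suc)

lemma codes_append: assumes "a \<in> C" "b \<in> C" "trn (last a) (hd b)" shows "a @ b \<in> C"
  unfolding codes_iff_nth
proof (intro conjI allI impI)
  show "a @ b \<noteq> []" using assms by (auto simp: codes_def)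
  fix i assume "i < length (a @ b)"
  then show "(a @ b) ! i \<in> E" using assms codes_nth_edge by (auto simp: nth_append)
next
  fix i assume i: "Suc i < length (a @ b)"
  have a: "a \<noteq> []" "b \<noteq> []" using assms by (auto simp: codes_def)
  consider "Suc i < length a" | "Suc i = length a" | "Suc i > length a" by linarith
  then show "trn ((a @ b) ! i) ((a @ b) ! Suc i)"
  proof cases
    case 1 then show ?thesis using codes_turn[OF assms(1)] by (auto simp: nth_append)
  next
    case 2
    then have "i = length a - 1" by simp
    then show ?thesis using assms(3) a 2 by (simp add: nth_append last_conv_nth hd_conv_nth)
  next
    case 3 then show ?thesis using codes_turn[OF assms(2), of "i - length a"] i
      by (auto simp: nth_append Suc_diff_le)
  qed
qed

lemma codes_snoc: assumes "c \<in> C" "trn (last c) e" shows "c @ [e] \<in> C"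
  using codes_append[OF assms(1), of "[e]"] assms turn_edges by auto

lemma codes_snocD: assumes "c @ [e] \<in> C" "c \<noteq> []" shows "c \<in> C" "trn (last c) e"
proof -
  show "c \<in> C" using codes_take[OF assms(1), of "length c"] assms by auto
  have "trn ((c@[e]) ! (length c - 1)) ((c@[e]) ! Suc (length c - 1))"
    using codes_turn[OF assms(1), of "length c - 1"] assms by auto
  then show "trn (last c) e" using assms by (auto simp: nth_append last_conv_nth)
qed

lemma codes_appendD: assumes "a @ b \<in> C" "a \<noteq> []" "b \<noteq> []"
  shows "a \<in> C" "b \<in> C" "trn (last a) (hd b)"
proof -
  show "a \<in> C" using codes_take[OF assms(1), of "length a"] assms by auto
  show "b \<in> C" using codes_drop[OF assms(1), of "length a"] assms by auto
  have "trn ((a@b) ! (length a - 1)) ((a@b) ! Suc (length a - 1))"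
    using codes_turn[OF assms(1), of "length a - 1"] assms by auto
  then show "trn (last a) (hd b)" using assms by (auto simp: nth_append last_conv_nth hd_conv_nth)
qed

lemma codes_path_inv: assumes "c \<in> C" shows "path_inv c \<in> C"
  unfolding codes_iff_nth
proof (intro conjI allI impI)
  show "path_inv c \<noteq> []" using assms by (auto simp: codes_def path_inv_def)
  fix i assume "i < length (path_inv c)"
  then show "path_inv c ! i \<in> E"
    using assms codes_nth_edge rev_edge_edges by (auto simp: path_inv_nth)
next
  fix i assume i: "Suc i < length (path_inv c)"
  have "trn (c ! (length c - Suc (Suc i))) (c ! Suc (length c - Suc (Suc i)))"
    using codes_turn[OF assms] i by auto
  moreover have "Suc (length c - Suc (Suc i)) = length c - Suc i" using i by auto
  ultimately show "trn (path_inv c ! i) (path_inv c ! Suc i)"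
    using i turn_rev by (auto simp: path_inv_nth)
qed

lemma set_codes: "c \<in> C \<Longrightarrow> set c \<subseteq> E"
  by (metis codes_nth_edge in_set_conv_nth subsetI)

lemma codes_in_lists: "{c \<in> C. length c = m} \<subseteq> {xs. set xs \<subseteq> E \<and> length xs = m}"
  using set_codes by blast

lemma finite_codes_length: "finite {c \<in> C. length c = m}"
  using finite_subset[OF codes_in_lists finite_lists_length_eq[OF finite_edges]] .

lemma finite_turns_from: "finite {e. trn a e}"
  by (rule finite_subset[OF _ finite_edges]) (use turn_edges in blast)

lemma paths_turn: "p \<in> paths adj \<Longrightarrow> trn (p i) (p (Suc i))" by (simp add: paths_def)

lemma paths_edge: "p \<in> paths adj \<Longrightarrow> p i \<in> E" using paths_turn turn_edges by blast

lemma pref_codes: assumes "p \<in> paths adj" "0 < n" shows "pref p n \<in> C"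
  unfolding codes_iff_nth using assms paths_edge paths_turn by (auto simp: pref_def)

lemma district_iff: "p \<in> P c \<longleftrightarrow> p \<in> paths adj \<and> pref p (length c) = c"
  by (auto simp: district_def list_eq_iff_nth_eq)

lemma district_pref: "p \<in> paths adj \<Longrightarrow> 0 < n \<Longrightarrow> p \<in> P (pref p n)"
  by (simp add: district_iff)

definition next_edge :: "'v \<times> 'v \<Rightarrow> 'v \<times> 'v" where "next_edge e = (SOME e'. trn e e')"

lemma next_edge: "e \<in> E \<Longrightarrow> trn e (next_edge e)"
  unfolding next_edge_def using turn_exists someI_ex by metis

lemma next_edge_iter:
  "e \<in> E \<Longrightarrow> (next_edge ^^ k) e \<in> E \<and> trn ((next_edge ^^ k) e) ((next_edge ^^ Suc k) e)"
proof (induction k)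
  case 0 then show ?case using next_edge by simp
next
  case (Suc k)
  then have "(next_edge ^^ Suc k) e \<in> E" using turn_edges by (metis funpow.simps(2) o_apply)
  then show ?case using next_edge by simp
qed

lemma district_nonempty: assumes "c \<in> C" shows "\<exists>p. p \<in> P c"
proof -
  have ne: "c \<noteq> []" using assms by (auto simp: codes_def)
  have lE: "last c \<in> E" using codes_nth_edge[OF assms, of "length c - 1"] ne
    by (simp add: last_conv_nth)
  define p where
    "p i = (if i < length c then c ! i else (next_edge ^^ (i - (length c - 1))) (last c))" for i
  have p2: "i \<ge> length c - 1 \<Longrightarrow> p i = (next_edge ^^ (i - (length c - 1))) (last c)" for i
  proof (cases "i < length c")
    case True
    assume "i \<ge> length c - 1"
    then have "i = length c - 1" using True by simp
    then show ?thesis using ne by (simp add: p_def last_conv_nth)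
  qed (simp add: p_def)
  have "p \<in> paths adj"
    unfolding paths_def
  proof (intro CollectI allI)
    fix i
    show "trn (p i) (p (Suc i))"
    proof (cases "Suc i < length c")
      case True then show ?thesis using codes_turn[OF assms] by (simp add: p_def)
    next
      case False
      then have "p i = (next_edge ^^ (i - (length c - 1))) (last c)"
        and "p (Suc i) = (next_edge ^^ Suc (i - (length c - 1))) (last c)"
        using p2[of i] p2[of "Suc i"] by (auto simp: Suc_diff_le)
      then show ?thesis using next_edge_iter[OF lE] by simp
    qed
  qed
  moreover have "\<forall>i<length c. p i = c ! i" by (simp add: p_def)
  ultimately show ?thesis unfolding district_def by blast
qed

definition district_point :: "('v \<times> 'v) list \<Rightarrow> nat \<Rightarrow> 'v \<times> 'v" where
  "district_point c = (SOME p. p \<in> P c)"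

lemma district_point: "c \<in> C \<Longrightarrow> district_point c \<in> P c"
  unfolding district_point_def using district_nonempty someI_ex by metis

lemma district_subset_iff: assumes "c \<in> C" "c' \<in> C" "length c \<le> length c'"
  shows "P c' \<subseteq> P c \<longleftrightarrow> take (length c) c' = c"
proof
  assume "P c' \<subseteq> P c"
  then have "district_point c' \<in> P c" using district_point[OF assms(2)] by auto
  then have "pref (district_point c') (length c) = c" by (simp add: district_iff)
  moreover have "pref (district_point c') (length c') = c'"
    using district_point[OF assms(2)] by (simp add: district_iff)
  ultimately show "take (length c) c' = c"
    using pref_take[OF assms(3), of "district_point c'"] by simp
next
  assume a: "take (length c) c' = c"
  show "P c' \<subseteq> P c"
  proof
    fix p assume "p \<in> P c'"
    then have "p \<in> paths adj" "pref p (length c') = c'" by (auto simp: district_iff)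
    then show "p \<in> P c" using pref_take[OF assms(3), of p] a by (simp add: district_iff)
  qed
qed

lemma district_disjoint: assumes "length c = length c'" "c \<noteq> c'" shows "P c \<inter> P c' = {}"
  using assms by (auto simp: district_iff)

lemma district_inj: assumes "c \<in> C" "length c = length c'" "P c = P c'" shows "c = c'"
  using district_disjoint[OF assms(2)] district_point[OF assms(1)] assms(3) by blast

section \<open>Clopen subsets of the boundary\<close>

text \<open>Postal codes starting at \<open>v\<^sub>0\<close> are the vertices of the universal cover other than the
  base vertex; their districts are the basic clopen sets of the boundary.\<close>
definition based_codes :: "('v \<times> 'v) list set" where
  "based_codes = {c \<in> C. fst (hd c) = v0}"
abbreviation "boundary \<equiv> bd adj v0"
definition level_codes :: "nat \<Rightarrow> (nat \<Rightarrow> 'v \<times> 'v) set \<Rightarrow> ('v \<times> 'v) list set" where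
  "level_codes N A = {c \<in> based_codes. length c = N \<and> P c \<subseteq> A}"
definition level_union :: "nat \<Rightarrow> (nat \<Rightarrow> 'v \<times> 'v) set \<Rightarrow> bool" where
  "level_union N A \<longleftrightarrow> A = \<Union>(P ` level_codes N A)"
abbreviation "clopen \<equiv> clopen_bd adj v0"

lemma based_codes_codes: "c \<in> based_codes \<Longrightarrow> c \<in> C" by (simp add: based_codes_def)
lemma based_codes_nonempty: "c \<in> based_codes \<Longrightarrow> c \<noteq> []" by (simp add: based_codes_def codes_def)

lemma finite_based_codes_length: "finite {c \<in> based_codes. length c = N}"
  by (rule finite_subset[OF _ finite_codes_length[of N]]) (auto simp: based_codes_def)

lemma finite_level_codes: "finite (level_codes N A)"
  by (rule finite_subset[OF _ finite_based_codes_length[of N]]) (auto simp: level_codes_def)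

lemma district_subset_boundary: assumes "c \<in> based_codes" shows "P c \<subseteq> boundary"
proof
  fix p assume p: "p \<in> P c"
  have "c \<noteq> []" using based_codes_nonempty assms by auto
  then have "p 0 = hd c" using p by (auto simp: district_def hd_conv_nth)
  then show "p \<in> boundary" using p assms by (auto simp: bd_def based_codes_def district_def)
qed

lemma pref_based_code:
  assumes "p \<in> boundary" "0 < N"
  shows "pref p N \<in> based_codes" "p \<in> P (pref p N)"
proof -
  have "p \<in> paths adj" using assms by (auto simp: bd_def)
  moreover have "hd (pref p N) = p 0" using assms(2) by (simp add: pref_def hd_map upt_conv_Cons)
  ultimately show "p \<in> P (pref p N)" "pref p N \<in> based_codes" using assms pref_codes district_pref
    by (auto simp: based_codes_def bd_def)
qed

lemma level_union_subset_boundary: "level_union N A \<Longrightarrow> A \<subseteq> boundary"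
  unfolding level_union_def level_codes_def using district_subset_boundary by blast

lemma level_codes_pos: "c \<in> level_codes N A \<Longrightarrow> 0 < N"
  using based_codes_nonempty by (auto simp: level_codes_def)

lemma level_union_prefix: assumes "level_union N A" "x \<in> A" shows "pref x N \<in> level_codes N A"
proof -
  obtain c where c: "c \<in> level_codes N A" "x \<in> P c" using assms unfolding level_union_def by blast
  then have "length c = N" by (simp add: level_codes_def)
  then have "pref x N = c" using c by (simp add: district_iff)
  then show ?thesis using c by simp
qed

lemma level_union_mono: assumes "level_union N A" "N \<le> N'" shows "level_union N' A"
  unfolding level_union_def
proof
  show "A \<subseteq> \<Union> (P ` level_codes N' A)"
  proof
    fix x assume x: "x \<in> A"
    then have c: "pref x N \<in> level_codes N A" using level_union_prefix assms by blast
    then have N: "0 < N" using level_codes_pos by blast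
    have xB: "x \<in> boundary" using x level_union_subset_boundary assms by blast
    have c': "pref x N' \<in> based_codes" "x \<in> P (pref x N')"
      using pref_based_code[OF xB] N assms by auto
    have "P (pref x N') \<subseteq> P (pref x N)"
      using district_subset_iff[of "pref x N" "pref x N'"] c c' assms(2)
      by (simp add: based_codes_codes level_codes_def pref_take)
    then have "pref x N' \<in> level_codes N' A" using c c' by (auto simp: level_codes_def)
    then show "x \<in> \<Union> (P ` level_codes N' A)" using c' by blast
  qed
qed (auto simp: level_codes_def)

lemma level_union_district_cases:
  assumes "level_union N A" "c \<in> based_codes" "length c = N"
  shows "P c \<subseteq> A \<or> P c \<inter> A = {}"
proof (rule ccontr)
  assume na: "\<not> (P c \<subseteq> A \<or> P c \<inter> A = {})"
  then obtain p where p: "p \<in> P c" "p \<in> A" by auto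
  then have "pref p N \<in> level_codes N A" using level_union_prefix assms by blast
  moreover have "pref p N = c" using p assms by (simp add: district_iff)
  ultimately show False using na by (auto simp: level_codes_def)
qed

lemma level_union_Un: assumes "level_union N A" "level_union N B"
  shows "level_union N (A \<union> B)" "level_codes N (A \<union> B) = level_codes N A \<union> level_codes N B"
proof -
  show l: "level_codes N (A \<union> B) = level_codes N A \<union> level_codes N B"
  proof
    show "level_codes N (A \<union> B) \<subseteq> level_codes N A \<union> level_codes N B"
    proof
      fix c assume c: "c \<in> level_codes N (A \<union> B)"
      then have cV: "c \<in> based_codes" "length c = N" by (auto simp: level_codes_def)
      obtain p where p: "p \<in> P c" using district_point based_codes_codes cV by blast
      then have "p \<in> A \<or> p \<in> B" using c by (auto simp: level_codes_def)
      then have "P c \<subseteq> A \<or> P c \<subseteq> B"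
        using level_union_district_cases[OF assms(1) cV] level_union_district_cases[OF assms(2) cV] p by blast
      then show "c \<in> level_codes N A \<union> level_codes N B" using cV by (auto simp: level_codes_def)
    qed
  qed (auto simp: level_codes_def)
  show "level_union N (A \<union> B)" using assms l unfolding level_union_def by auto
qed

lemma level_union_empty: "level_union N {}"
  unfolding level_union_def level_codes_def using district_point based_codes_codes by blast

lemma level_union_district:
  assumes "c \<in> based_codes"
  shows "level_union (length c) (P c)" "level_codes (length c) (P c) = {c}"
proof -
  show l: "level_codes (length c) (P c) = {c}"
  proof
    show "level_codes (length c) (P c) \<subseteq> {c}"
    proof
      fix c' assume "c' \<in> level_codes (length c) (P c)"
      then have "c' \<in> based_codes" "length c' = length c" "P c' \<subseteq> P c"
        by (auto simp: level_codes_def)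
      then show "c' \<in> {c}" using district_subset_iff[of c c'] assms based_codes_codes by auto
    qed
  qed (use assms in \<open>auto simp: level_codes_def\<close>)
  show "level_union (length c) (P c)" unfolding level_union_def l by simp
qed

lemma level_union_UN_districts:
  assumes "finite D" "D \<subseteq> based_codes" "\<forall>c\<in>D. length c \<le> N"
  shows "level_union N (\<Union>(P ` D))"
  using assms
proof (induction D rule: finite_induct)
  case empty then show ?case by (simp add: level_union_empty)
next
  case (insert c D)
  have "level_union N (P c)"
    using level_union_mono[OF level_union_district(1)] insert.prems by simp
  then show ?case using level_union_Un(1) insert by simp
qed

lemma clopen_iff_level_union: "clopen A \<longleftrightarrow> (\<exists>N. level_union N A)"
proof
  assume "\<exists>N. level_union N A"
  then obtain N where N: "level_union N A" by auto
  show "clopen A" unfolding clopen_bd_def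
  proof (intro exI conjI)
    show "finite (level_codes N A)" by (rule finite_level_codes)
    show "\<forall>c\<in>level_codes N A. c \<in> C \<and> fst (hd c) = v0"
      by (auto simp: level_codes_def based_codes_def)
    show "\<forall>c\<in>level_codes N A. \<forall>c'\<in>level_codes N A. c \<noteq> c' \<longrightarrow> P c \<inter> P c' = {}"
      by (auto simp: level_codes_def intro!: district_disjoint)
    show "A = \<Union> (P ` level_codes N A)" using N by (simp add: level_union_def)
  qed
next
  assume "clopen A"
  then obtain D where D: "finite D" "\<forall>c\<in>D. c \<in> C \<and> fst (hd c) = v0" "A = \<Union>(P ` D)"
    unfolding clopen_bd_def by blast
  have "level_union (Max (insert 0 (length ` D))) (\<Union>(P ` D))"
    by (rule level_union_UN_districts) (use D in \<open>auto simp: based_codes_def\<close>)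
  then show "\<exists>N. level_union N A" using D(3) by blast
qed

lemma clopen_empty: "clopen {}" using clopen_iff_level_union level_union_empty by blast

lemma clopen_Union_districts:
  assumes "finite D" "D \<subseteq> based_codes" shows "clopen (\<Union>(P ` D))"
proof -
  have "level_union (Max (insert 0 (length ` D))) (\<Union>(P ` D))"
    by (rule level_union_UN_districts) (use assms in auto)
  then show ?thesis using clopen_iff_level_union by blast
qed

lemma clopen_district: "c \<in> based_codes \<Longrightarrow> clopen (P c)"
  using level_union_district clopen_iff_level_union by blast

lemma clopen_common_level:
  assumes "clopen A" "clopen B"
  obtains N where "level_union N A" "level_union N B"
proof -
  obtain N1 N2 where "level_union N1 A" "level_union N2 B"
    using clopen_iff_level_union assms by blast
  then have "level_union (max N1 N2) A" "level_union (max N1 N2) B" using level_union_mono by auto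
  then show ?thesis using that by blast
qed

lemma clopen_Un: assumes "clopen A" "clopen B" shows "clopen (A \<union> B)"
proof -
  obtain N where "level_union N A" "level_union N B" using clopen_common_level assms by blast
  then show ?thesis using level_union_Un(1) clopen_iff_level_union by blast
qed

lemma clopen_level_ge: assumes "clopen A" obtains N where "level_union N A" "N \<ge> K"
proof -
  obtain N1 where "level_union N1 A" using clopen_iff_level_union assms by blast
  then have "level_union (max N1 K) A" using level_union_mono by auto
  then show ?thesis using that by (meson max.cobounded2)
qed

lemma FA_bd_zero: "\<nu> \<in> FA_bd adj v0 \<Longrightarrow> \<not> clopen A \<Longrightarrow> \<nu> A = 0" by (simp add: FA_bd_def)
lemma FA_bd_add: "\<nu> \<in> FA_bd adj v0 \<Longrightarrow> clopen A \<Longrightarrow> clopen B \<Longrightarrow> A \<inter> B = {} \<Longrightarrow> \<nu> (A \<union> B) = \<nu> A + \<nu> B"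
  by (simp add: FA_bd_def)

lemma FA_bd_empty: assumes "\<nu> \<in> FA_bd adj v0" shows "\<nu> {} = 0"
  using FA_bd_add[OF assms clopen_empty clopen_empty] by simp

lemma FA_bd_Union_districts: assumes "\<nu> \<in> FA_bd adj v0" "S \<subseteq> {c \<in> based_codes. length c = N}"
  shows "\<nu> (\<Union>(P ` S)) = (\<Sum>c\<in>S. \<nu> (P c))"
proof -
  have "finite S" using finite_subset[OF assms(2) finite_based_codes_length] .
  then show ?thesis using assms(2)
  proof (induction S rule: finite_induct)
    case empty then show ?case using FA_bd_empty[OF assms(1)] by simp
  next
    case (insert c S)
    have "clopen (P c)" using clopen_district insert by auto
    moreover have "clopen (\<Union>(P ` S))" using clopen_Union_districts insert finite_subset by auto
    moreover have "P c \<inter> \<Union>(P ` S) = {}" using insert district_disjoint by auto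
    ultimately have "\<nu> (P c \<union> \<Union>(P ` S)) = \<nu> (P c) + \<nu> (\<Union>(P ` S))"
      using FA_bd_add[OF assms(1)] by blast
    then show ?case using insert by simp
  qed
qed

lemma FA_bd_level_sum: assumes "\<nu> \<in> FA_bd adj v0" "level_union N A"
  shows "\<nu> A = (\<Sum>c\<in>level_codes N A. \<nu> (P c))"
proof -
  have "\<nu> A = \<nu> (\<Union>(P ` level_codes N A))" using assms(2) level_union_def by metis
  also have "\<dots> = (\<Sum>c\<in>level_codes N A. \<nu> (P c))"
    by (rule FA_bd_Union_districts[OF assms(1), of _ N]) (auto simp: level_codes_def)
  finally show ?thesis .
qed

lemma level_codes_disjoint: "A \<inter> B = {} \<Longrightarrow> level_codes N A \<inter> level_codes N B = {}"
  using district_point based_codes_codes by (fastforce simp: level_codes_def)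

lemma FA_bd_eqI:
  assumes "\<nu>1 \<in> FA_bd adj v0" "\<nu>2 \<in> FA_bd adj v0" "\<forall>c\<in>based_codes. \<nu>1 (P c) = \<nu>2 (P c)"
  shows "\<nu>1 = \<nu>2"
proof
  fix A show "\<nu>1 A = \<nu>2 A"
  proof (cases "clopen A")
    case True
    then obtain N where N: "level_union N A" using clopen_iff_level_union by blast
    have "(\<Sum>c\<in>level_codes N A. \<nu>1 (P c)) = (\<Sum>c\<in>level_codes N A. \<nu>2 (P c))"
      by (rule sum.cong) (use assms(3) in \<open>auto simp: level_codes_def\<close>)
    then show ?thesis using FA_bd_level_sum[OF assms(1) N] FA_bd_level_sum[OF assms(2) N] by simp
  next
    case False then show ?thesis
      using FA_bd_zero[OF assms(1) False] FA_bd_zero[OF assms(2) False] by simp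
  qed
qed

lemma level_codes_Suc: assumes "level_union N A"
  shows "level_codes (Suc N) A = (\<lambda>(c, e). c @ [e]) ` Sigma (level_codes N A) (\<lambda>c. {e. trn (last c) e})"
proof
  show "level_codes (Suc N) A \<subseteq> (\<lambda>(c, e). c @ [e]) ` Sigma (level_codes N A) (\<lambda>c. {e. trn (last c) e})"
  proof
    fix c' assume c': "c' \<in> level_codes (Suc N) A"
    then have c'V: "c' \<in> based_codes" "length c' = Suc N" "P c' \<subseteq> A" by (auto simp: level_codes_def)
    obtain p where p: "p \<in> P c'" using district_point based_codes_codes c'V by blast
    then have "p \<in> A" using c'V by auto
    then have "pref p N \<in> level_codes N A" using level_union_prefix assms by blast
    then have N0: "0 < N" using level_codes_pos by blast
    define c where "c = butlast c'"
    define e where "e = last c'"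
    have ce: "c' = c @ [e]" using c'V based_codes_nonempty by (simp add: c_def e_def)
    have lc: "length c = N" using c'V by (simp add: c_def)
    then have cne: "c \<noteq> []" using N0 by auto
    have cC: "c \<in> C" "trn (last c) e" using codes_snocD[of c e] ce c'V based_codes_codes cne by auto
    have cV: "c \<in> based_codes" using cC c'V ce cne by (auto simp: based_codes_def)
    have "P c' \<subseteq> P c" using district_subset_iff[of c c'] cC c'V ce based_codes_codes by simp
    then have "P c \<subseteq> A" using level_union_district_cases[OF assms cV lc] p c'V by blast
    then have cl: "c \<in> level_codes N A" using cV lc by (simp add: level_codes_def)
    show "c' \<in> (\<lambda>(c, e). c @ [e]) ` Sigma (level_codes N A) (\<lambda>c. {e. trn (last c) e})"
      unfolding image_iff by (intro bexI[of _ "(c, e)"]) (use ce cC cl in auto)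
  qed
next
  show "(\<lambda>(c, e). c @ [e]) ` Sigma (level_codes N A) (\<lambda>c. {e. trn (last c) e}) \<subseteq> level_codes (Suc N) A"
  proof clarify
    fix c e assume c: "c \<in> level_codes N A" "trn (last c) e"
    then have cV: "c \<in> based_codes" "length c = N" "P c \<subseteq> A" by (auto simp: level_codes_def)
    have "c @ [e] \<in> C" using codes_snoc c based_codes_codes cV by blast
    then have ceV: "c @ [e] \<in> based_codes"
      using cV based_codes_nonempty by (auto simp: based_codes_def)
    have "P (c @ [e]) \<subseteq> P c" using district_subset_iff[of c "c @ [e]"] ceV cV based_codes_codes
      by simp
    then show "c @ [e] \<in> level_codes (Suc N) A" using ceV cV by (auto simp: level_codes_def)
  qed
qed

lemma sum_level_codes_Suc:
  assumes "level_union N A" "\<forall>c\<in>based_codes. \<phi> c = (\<Sum>e\<in>{e. trn (last c) e}. \<phi> (c @ [e]))"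
  shows "(\<Sum>c\<in>level_codes (Suc N) A. \<phi> c) = (\<Sum>c\<in>level_codes N A. \<phi> c)"
proof -
  have inj: "inj_on (\<lambda>(c, e). c @ [e]) (Sigma (level_codes N A) (\<lambda>c. {e. trn (last c) e}))"
    by (auto simp: inj_on_def)
  have "(\<Sum>c\<in>level_codes (Suc N) A. \<phi> c) = (\<Sum>x\<in>Sigma (level_codes N A) (\<lambda>c. {e. trn (last c) e}). \<phi> ((\<lambda>(c, e). c @ [e]) x))"
    unfolding level_codes_Suc[OF assms(1)] by (rule sum.reindex[OF inj, unfolded comp_def])
  also have "\<dots> = (\<Sum>c\<in>level_codes N A. \<Sum>e\<in>{e. trn (last c) e}. \<phi> (c @ [e]))"
    by (subst sum.Sigma) (simp_all add: finite_level_codes finite_turns_from prod.case_distrib)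
  also have "\<dots> = (\<Sum>c\<in>level_codes N A. \<phi> c)"
  proof (rule sum.cong)
    fix c assume "c \<in> level_codes N A"
    then have "c \<in> based_codes" by (simp add: level_codes_def)
    then show "(\<Sum>e\<in>{e. trn (last c) e}. \<phi> (c @ [e])) = \<phi> c" using assms(2) by metis
  qed simp
  finally show ?thesis .
qed

lemma sum_level_codes_mono:
  assumes "level_union N A" "N \<le> N'" "\<forall>c\<in>based_codes. \<phi> c = (\<Sum>e\<in>{e. trn (last c) e}. \<phi> (c @ [e]))"
  shows "(\<Sum>c\<in>level_codes N' A. \<phi> c) = (\<Sum>c\<in>level_codes N A. \<phi> c)"
  using assms(2)
proof (induction N' rule: dec_induct)
  case (step n)
  have "level_union n A" using level_union_mono[OF assms(1)] step(1) by simp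
  from sum_level_codes_Suc[OF this assms(3)] step(3) show ?case by simp
qed simp

lemma FA_bd_extend:
  assumes "\<forall>c\<in>based_codes. \<phi> c = (\<Sum>e\<in>{e. trn (last c) e}. \<phi> (c @ [e]))"
  shows "\<exists>\<nu>\<in>FA_bd adj v0. \<forall>c\<in>based_codes. \<nu> (P c) = \<phi> c"
proof -
  define \<nu> where "\<nu> A = (if clopen A then (\<Sum>c\<in>level_codes (LEAST N. level_union N A) A. \<phi> c) else 0)" for A
  have key: "\<nu> A = (\<Sum>c\<in>level_codes N A. \<phi> c)" if "level_union N A" for N A
  proof -
    have cl: "clopen A" using that clopen_iff_level_union by blast
    have L: "level_union (LEAST N. level_union N A) A" using that by (rule LeastI)
    have "(LEAST N. level_union N A) \<le> N" using that by (rule Least_le)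
    from sum_level_codes_mono[OF L this assms] cl show ?thesis by (simp add: \<nu>_def)
  qed
  have "\<nu> \<in> FA_bd adj v0" unfolding FA_bd_def
  proof (intro CollectI conjI allI impI)
    fix A assume "\<not> clopen A" then show "\<nu> A = 0" by (simp add: \<nu>_def)
  next
    fix A B assume ab: "clopen A" "clopen B" "A \<inter> B = {}"
    obtain N where N: "level_union N A" "level_union N B" using clopen_common_level ab by blast
    have d: "level_codes N A \<inter> level_codes N B = {}" using level_codes_disjoint ab(3) by blast
    have "\<nu> (A \<union> B) = (\<Sum>c\<in>level_codes N A \<union> level_codes N B. \<phi> c)"
      using key[OF level_union_Un(1)[OF N]] level_union_Un(2)[OF N] by simp
    also have "\<dots> = (\<Sum>c\<in>level_codes N A. \<phi> c) + (\<Sum>c\<in>level_codes N B. \<phi> c)"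
      by (rule sum.union_disjoint) (auto simp: finite_level_codes d)
    finally show "\<nu> (A \<union> B) = \<nu> A + \<nu> B" using key[OF N(1)] key[OF N(2)] by simp
  qed
  moreover have "\<forall>c\<in>based_codes. \<nu> (P c) = \<phi> c"
  proof
    fix c assume "c \<in> based_codes"
    from key[OF level_union_district(1)[OF this]] level_union_district(2)[OF this] show "\<nu> (P c) = \<phi> c"
      by simp
  qed
  ultimately show ?thesis by blast
qed

lemma FA_bd_district_split:
  assumes nu: "\<nu> \<in> FA_bd adj v0" and c: "c \<in> based_codes"
  shows "\<nu> (P c) = (\<Sum>e\<in>{e. trn (last c) e}. \<nu> (P (c @ [e])))"
proof -
  have m: "level_union (length c) (P c)" and l: "level_codes (length c) (P c) = {c}"
    using level_union_district[OF c] by auto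
  have "\<nu> (P c) = (\<Sum>x\<in>level_codes (Suc (length c)) (P c). \<nu> (P x))"
    using FA_bd_level_sum[OF nu level_union_mono[OF m, of "Suc (length c)"]] by simp
  also have "level_codes (Suc (length c)) (P c) = (\<lambda>e. c @ [e]) ` {e. trn (last c) e}"
    unfolding level_codes_Suc[OF m] l by auto
  also have "(\<Sum>x\<in>(\<lambda>e. c @ [e]) ` {e. trn (last c) e}. \<nu> (P x)) = (\<Sum>e\<in>{e. trn (last c) e}. \<nu> (P (c @ [e])))"
    by (simp add: sum.reindex inj_on_def)
  finally show ?thesis .
qed

lemma FA_P_zero: "\<mu> \<in> FA_P adj \<Longrightarrow> c \<notin> C \<Longrightarrow> \<mu> c = 0" by (simp add: FA_P_def)
lemma FA_P_add: "\<mu> \<in> FA_P adj \<Longrightarrow> c \<in> C \<Longrightarrow> \<mu> c = (\<Sum>e\<in>{e. trn (last c) e}. \<mu> (c @ [e]))"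
  by (simp add: FA_P_def)

lemma Res_eqI: assumes "\<nu> \<in> FA_bd adj v0" "\<forall>c\<in>based_codes. \<nu> (P c) = \<mu> c" shows "Res adj v0 \<mu> = \<nu>"
  unfolding Res_def
proof (rule the_equality)
  show "\<nu> \<in> FA_bd adj v0 \<and> (\<forall>c\<in>C. fst (hd c) = v0 \<longrightarrow> \<nu> (P c) = \<mu> c)"
    using assms by (auto simp: based_codes_def)
  fix \<nu>' assume "\<nu>' \<in> FA_bd adj v0 \<and> (\<forall>c\<in>C. fst (hd c) = v0 \<longrightarrow> \<nu>' (P c) = \<mu> c)"
  then show "\<nu>' = \<nu>" using FA_bd_eqI[of \<nu>' \<nu>] assms by (auto simp: based_codes_def)
qed

lemma Res_FA_P:
  assumes "\<mu> \<in> FA_P adj"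
  shows Res_FA_bd: "Res adj v0 \<mu> \<in> FA_bd adj v0"
    and Res_district: "\<forall>c\<in>based_codes. Res adj v0 \<mu> (P c) = \<mu> c"
proof -
  have "\<forall>c\<in>based_codes. \<mu> c = (\<Sum>e\<in>{e. trn (last c) e}. \<mu> (c @ [e]))"
    using FA_P_add[OF assms] based_codes_codes by blast
  then obtain \<nu> where n1: "\<nu> \<in> FA_bd adj v0" and n2: "\<forall>c\<in>based_codes. \<nu> (P c) = \<mu> c"
    using FA_bd_extend by blast
  then have "Res adj v0 \<mu> = \<nu>" by (rule Res_eqI)
  then show "Res adj v0 \<mu> \<in> FA_bd adj v0" "\<forall>c\<in>based_codes. Res adj v0 \<mu> (P c) = \<mu> c"
    using n1 n2 by auto
qed

section \<open>The dual transfer operator\<close>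

definition codes_of_length :: "nat \<Rightarrow> ('v \<times> 'v) list set" where
  "codes_of_length m = {c \<in> C. length c = m}"

lemma finite_codes_of_length: "finite (codes_of_length m)"
  using finite_codes_length by (simp add: codes_of_length_def)

definition level_pairing :: "nat \<Rightarrow> ((nat \<Rightarrow> 'v \<times> 'v) \<Rightarrow> complex) \<Rightarrow> (('v \<times> 'v) list \<Rightarrow> complex) \<Rightarrow> complex"
  where "level_pairing m f \<mu> = (\<Sum>c\<in>codes_of_length m. f (district_point c) * \<mu> c)"

lemma pairing_eq_Least:
  "pairing adj f \<mu> = level_pairing (LEAST m. 1 \<le> m \<and> const_on_districts adj m f) f \<mu>"
  by (simp add: pairing_def level_pairing_def codes_of_length_def district_point_def Let_def)

lemma const_on_districts_Suc:
  assumes "const_on_districts adj m f" "1 \<le> m"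
  shows "const_on_districts adj (Suc m) f"
  unfolding const_on_districts_def
proof (intro ballI impI)
  fix c' p q assume c': "c' \<in> C" "length c' = Suc m" and pq: "p \<in> P c'" "q \<in> P c'"
  have tC: "take m c' \<in> C" using codes_take[OF c'(1)] assms(2) by auto
  have "P c' \<subseteq> P (take m c')" using district_subset_iff[OF tC c'(1)] c' by simp
  then have pq': "p \<in> P (take m c')" "q \<in> P (take m c')" using pq by auto
  have H: "\<And>c p q. c \<in> C \<Longrightarrow> length c = m \<Longrightarrow> p \<in> P c \<Longrightarrow> q \<in> P c \<Longrightarrow> f p = f q"
    using assms(1) unfolding const_on_districts_def by blast
  have "length (take m c') = m" using c' by simp
  from H[OF tC this pq'] show "f p = f q" .
qed

lemma codes_of_length_Suc: assumes "1 \<le> m"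
  shows "codes_of_length (Suc m) = (\<lambda>(c, e). c @ [e]) ` Sigma (codes_of_length m) (\<lambda>c. {e. trn (last c) e})"
proof
  show "codes_of_length (Suc m) \<subseteq> (\<lambda>(c, e). c @ [e]) ` Sigma (codes_of_length m) (\<lambda>c. {e. trn (last c) e})"
  proof
    fix c' assume "c' \<in> codes_of_length (Suc m)"
    then have c': "c' \<in> C" "length c' = Suc m" by (auto simp: codes_of_length_def)
    define c where "c = butlast c'"
    define e where "e = last c'"
    have "c' \<noteq> []" using c' by auto
    then have ce: "c' = c @ [e]" by (simp add: c_def e_def)
    have lc: "length c = m" using c' by (simp add: c_def)
    then have cne: "c \<noteq> []" using assms by auto
    have cC: "c \<in> C" "trn (last c) e" using codes_snocD[of c e] ce c' cne by auto
    have cl: "c \<in> codes_of_length m" using cC lc by (simp add: codes_of_length_def)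
    show "c' \<in> (\<lambda>(c, e). c @ [e]) ` Sigma (codes_of_length m) (\<lambda>c. {e. trn (last c) e})"
      unfolding image_iff by (intro bexI[of _ "(c, e)"]) (use ce cC cl in auto)
  qed
next
  show "(\<lambda>(c, e). c @ [e]) ` Sigma (codes_of_length m) (\<lambda>c. {e. trn (last c) e}) \<subseteq> codes_of_length (Suc m)"
    using codes_snoc by (auto simp: codes_of_length_def)
qed

lemma level_pairing_Suc:
  assumes "\<mu> \<in> FA_P adj" "const_on_districts adj m f" "1 \<le> m"
  shows "level_pairing (Suc m) f \<mu> = level_pairing m f \<mu>"
proof -
  let ?S = "Sigma (codes_of_length m) (\<lambda>c. {e. trn (last c) e})"
  have inj: "inj_on (\<lambda>(c, e). c @ [e]) ?S" by (auto simp: inj_on_def)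
  have fe: "f (district_point (c @ [e])) = f (district_point c)" if "c \<in> codes_of_length m" "trn (last c) e" for c e
  proof -
    have cC: "c \<in> C" "length c = m" using that by (auto simp: codes_of_length_def)
    have ceC: "c @ [e] \<in> C" using codes_snoc cC that by blast
    have "P (c @ [e]) \<subseteq> P c" using district_subset_iff[OF cC(1) ceC] by simp
    then have "district_point (c @ [e]) \<in> P c" using district_point[OF ceC] by blast
    moreover have "\<forall>p \<in> P c. \<forall>q \<in> P c. f p = f q"
      using assms(2) cC unfolding const_on_districts_def by blast
    ultimately show ?thesis using district_point[OF cC(1)] by blast
  qed
  have "level_pairing (Suc m) f \<mu> = (\<Sum>x\<in>?S. f (district_point ((\<lambda>(c, e). c @ [e]) x)) * \<mu> ((\<lambda>(c, e). c @ [e]) x))"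
    unfolding level_pairing_def codes_of_length_Suc[OF assms(3)] by (rule sum.reindex[OF inj, unfolded comp_def])
  also have "\<dots> = (\<Sum>(c, e)\<in>?S. f (district_point c) * \<mu> (c @ [e]))"
    by (rule sum.cong) (auto simp: fe)
  also have "\<dots> = (\<Sum>c\<in>codes_of_length m. \<Sum>e\<in>{e. trn (last c) e}. f (district_point c) * \<mu> (c @ [e]))"
    by (rule sum.Sigma[symmetric]) (simp_all add: finite_codes_of_length finite_turns_from)
  also have "\<dots> = level_pairing m f \<mu>"
    unfolding level_pairing_def
  proof (rule sum.cong)
    fix c assume "c \<in> codes_of_length m"
    then have "\<mu> c = (\<Sum>e\<in>{e. trn (last c) e}. \<mu> (c @ [e]))"
      using FA_P_add[OF assms(1)] by (simp add: codes_of_length_def)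
    then show "(\<Sum>e\<in>{e. trn (last c) e}. f (district_point c) * \<mu> (c @ [e])) = f (district_point c) * \<mu> c"
      by (simp add: sum_distrib_left)
  qed simp
  finally show ?thesis .
qed

lemma pairing_eq_level_pairing:
  assumes "\<mu> \<in> FA_P adj" "const_on_districts adj m f" "1 \<le> m"
  shows "pairing adj f \<mu> = level_pairing m f \<mu>"
proof -
  define m0 where "m0 = (LEAST m. 1 \<le> m \<and> const_on_districts adj m f)"
  have L: "1 \<le> m0 \<and> const_on_districts adj m0 f" unfolding m0_def by (rule LeastI[of _ m]) (use assms in auto)
  have le: "m0 \<le> m" unfolding m0_def by (rule Least_le) (use assms in auto)
  have K: "1 \<le> k \<and> const_on_districts adj k f \<and> level_pairing k f \<mu> = level_pairing m0 f \<mu>"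
    if "m0 \<le> k" for k
    using that
  proof (induction k rule: dec_induct)
    case (step n)
    then have n: "1 \<le> n" "const_on_districts adj n f" by auto
    then show ?case
      using const_on_districts_Suc[OF n(2) n(1)] level_pairing_Suc[OF assms(1) n(2) n(1)] step(3) by simp
  qed (use L in simp)
  have "pairing adj f \<mu> = level_pairing m0 f \<mu>" unfolding pairing_eq_Least m0_def ..
  then show ?thesis using K[OF le] by simp
qed

lemma finite_turns_to: "finite {e. trn e b}"
  by (rule finite_subset[OF _ finite_edges]) (use turn_edges in blast)

lemma case_nat_paths: assumes "p \<in> paths adj" "trn e0 (p 0)" shows "case_nat e0 p \<in> paths adj"
  unfolding paths_def
proof (intro CollectI allI)
  fix i show "trn (case_nat e0 p i) (case_nat e0 p (Suc i))"
    using assms paths_turn by (cases i) auto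
qed

lemma case_nat_district_iff:
  assumes "c \<noteq> []" "p \<in> paths adj" "trn e (p 0)"
  shows "case_nat e p \<in> P c \<longleftrightarrow> e = hd c \<and> p \<in> P (tl c)"
  using case_nat_paths[OF assms(2,3)] assms(1,2)
  by (cases c) (auto simp: district_iff pref_Suc_case_nat)

lemma transfer_indic_long:
  assumes "c \<in> C" "2 \<le> length c" "p \<in> paths adj"
  shows "transfer adj (indic adj c) p = indic adj (tl c) p"
proof -
  have c: "c \<noteq> []" using assms(2) by auto
  have "transfer adj (indic adj c) p = (\<Sum>e0\<in>{e. trn e (p 0)}. if e0 = hd c \<and> p \<in> P (tl c) then 1 else 0)"
    unfolding transfer_def indic_def
      by (rule sum.cong) (simp_all add: case_nat_district_iff[OF c assms(3)])
  also have "\<dots> = (if p \<in> P (tl c) then 1 else 0)"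
  proof (cases "p \<in> P (tl c)")
    case True
    then have "p 0 = c ! 1" using assms(2) by (simp add: district_def nth_tl)
    then have "trn (hd c) (p 0)"
      using codes_turn[OF assms(1), of 0] assms(2) c by (simp add: hd_conv_nth)
    then show ?thesis using True finite_turns_to by (simp add: sum.delta)
  qed simp
  finally show ?thesis by (simp add: indic_def)
qed

lemma transfer_indic_single:
  assumes "p \<in> paths adj"
  shows "transfer adj (indic adj [a]) p = (if trn a (p 0) then 1 else 0)"
proof -
  have mem: "indic adj [a] (case_nat e0 p) = (if e0 = a then 1 else 0)" if "trn e0 (p 0)" for e0
    using case_nat_district_iff[of "[a]" p e0] assms that by (simp add: indic_def district_iff)
  have "transfer adj (indic adj [a]) p = (\<Sum>e0\<in>{e. trn e (p 0)}. (if e0 = a then 1 else 0))"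
    unfolding transfer_def by (rule sum.cong) (auto simp: mem)
  also have "\<dots> = (if trn a (p 0) then 1 else 0)" using finite_turns_to by (simp add: sum.delta)
  finally show ?thesis .
qed

lemma transfer_dual_long:
  assumes "\<mu> \<in> FA_P adj" "c \<in> C" "2 \<le> length c"
  shows "transfer_dual adj \<mu> c = \<mu> (tl c)"
proof -
  let ?f = "transfer adj (indic adj c)"
  have tlC: "tl c \<in> C" using codes_tl assms by blast
  have ind: "indic adj (tl c) p = indic adj (tl c) q" if "p \<in> P c''" "q \<in> P c''" "length c'' = length c - 1" for p q c''
  proof -
    have "pref p (length c'') = pref q (length c'')" using that by (simp add: district_iff)
    then show ?thesis using that by (simp add: indic_def district_iff)
  qed
  have cod: "const_on_districts adj (length c - 1) ?f"
    unfolding const_on_districts_def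
  proof (intro ballI impI)
    fix c'' p q assume "c'' \<in> C" "length c'' = length c - 1" "p \<in> P c''" "q \<in> P c''"
    then show "?f p = ?f q" using transfer_indic_long[OF assms(2,3)] ind by (simp add: district_def)
  qed
  have "transfer_dual adj \<mu> c = (\<Sum>c''\<in>codes_of_length (length c - 1). ?f (district_point c'') * \<mu> c'')"
    using pairing_eq_level_pairing[OF assms(1) cod] assms by (simp add: transfer_dual_def level_pairing_def)
  also have "\<dots> = (\<Sum>c''\<in>codes_of_length (length c - 1). (if c'' = tl c then \<mu> c'' else 0))"
  proof (rule sum.cong)
    fix c'' assume "c'' \<in> codes_of_length (length c - 1)"
    then have c'': "c'' \<in> C" "length c'' = length c - 1" by (auto simp: codes_of_length_def)
    have pk: "district_point c'' \<in> P c''" using district_point c'' by blast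
    then have "?f (district_point c'') = indic adj (tl c) (district_point c'')"
      using transfer_indic_long[OF assms(2,3)] by (simp add: district_def)
    also have "\<dots> = (if c'' = tl c then 1 else 0)"
      using pk c'' by (auto simp: indic_def district_iff)
    finally show "?f (district_point c'') * \<mu> c'' = (if c'' = tl c then \<mu> c'' else 0)" by simp
  qed simp
  also have "\<dots> = \<mu> (tl c)" using finite_codes_of_length tlC
    by (simp add: sum.delta' codes_of_length_def)
  finally show ?thesis .
qed

lemma transfer_dual_single:
  assumes "\<mu> \<in> FA_P adj" "a \<in> E"
  shows "transfer_dual adj \<mu> [a] = (\<Sum>e\<in>{e. trn a e}. \<mu> [e])"
proof -
  let ?f = "transfer adj (indic adj [a])"
  have cod: "const_on_districts adj 1 ?f"
    unfolding const_on_districts_def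
  proof (intro ballI impI)
    fix c'' p q assume "c'' \<in> C" "length c'' = 1" "p \<in> P c''" "q \<in> P c''"
    then have "p 0 = q 0" "p \<in> paths adj" "q \<in> paths adj" by (auto simp: district_def)
    then show "?f p = ?f q" using transfer_indic_single by simp
  qed
  have "transfer_dual adj \<mu> [a] = (\<Sum>c''\<in>codes_of_length 1. ?f (district_point c'') * \<mu> c'')"
    using pairing_eq_level_pairing[OF assms(1) cod] assms by (simp add: transfer_dual_def level_pairing_def)
  also have "\<dots> = (\<Sum>e\<in>E. ?f (district_point [e]) * \<mu> [e])"
  proof -
    have "codes_of_length 1 = (\<lambda>e. [e]) ` E" by (auto simp: codes_of_length_def length_Suc_conv)
    then show ?thesis by (simp add: sum.reindex inj_on_def)
  qed
  also have "\<dots> = (\<Sum>e\<in>E. if trn a e then \<mu> [e] else 0)"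
  proof (rule sum.cong)
    fix e assume "e \<in> E"
    then have "district_point [e] \<in> P [e]" using district_point by simp
    then have "district_point [e] 0 = e" "district_point [e] \<in> paths adj"
      by (auto simp: district_def)
    then show "?f (district_point [e]) * \<mu> [e] = (if trn a e then \<mu> [e] else 0)"
      using transfer_indic_single by simp
  qed simp
  also have "\<dots> = (\<Sum>e\<in>{e\<in>E. trn a e}. \<mu> [e])" using finite_edges by (simp add: sum.inter_filter)
  also have "{e\<in>E. trn a e} = {e. trn a e}" using turn_edges by blast
  finally show ?thesis .
qed

text \<open>On codes of length at least 2 the operator \<open>\<T>'\<close> is the shift \<open>\<mu> \<mapsto> \<mu> \<circ> tl\<close>; on single
  edges the eigen equation then follows from additivity.\<close>
lemma eigenspace_P_iff:
  "\<mu> \<in> eigenspace_P adj z \<longleftrightarrow> \<mu> \<in> FA_P adj \<and> (\<forall>c\<in>C. 2 \<le> length c \<longrightarrow> \<mu> (tl c) = z * \<mu> c)"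
proof
  assume a: "\<mu> \<in> eigenspace_P adj z"
  then have fa: "\<mu> \<in> FA_P adj" and td: "transfer_dual adj \<mu> = (\<lambda>c. z * \<mu> c)"
    by (auto simp: eigenspace_P_def)
  show "\<mu> \<in> FA_P adj \<and> (\<forall>c\<in>C. 2 \<le> length c \<longrightarrow> \<mu> (tl c) = z * \<mu> c)"
  proof (intro conjI ballI impI)
    fix c assume "c \<in> C" "2 \<le> length c"
    have "transfer_dual adj \<mu> c = z * \<mu> c" using td by simp
    then show "\<mu> (tl c) = z * \<mu> c" using transfer_dual_long[OF fa \<open>c \<in> C\<close> \<open>2 \<le> length c\<close>] by simp
  qed (rule fa)
next
  assume a: "\<mu> \<in> FA_P adj \<and> (\<forall>c\<in>C. 2 \<le> length c \<longrightarrow> \<mu> (tl c) = z * \<mu> c)"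
  then have fa: "\<mu> \<in> FA_P adj" and ev: "\<And>c. c \<in> C \<Longrightarrow> 2 \<le> length c \<Longrightarrow> \<mu> (tl c) = z * \<mu> c" by auto
  have "transfer_dual adj \<mu> c = z * \<mu> c" for c
  proof (cases "c \<in> C")
    case False then show ?thesis using FA_P_zero[OF fa False] by (simp add: transfer_dual_def)
  next
    case True
    show ?thesis
    proof (cases "2 \<le> length c")
      case True then show ?thesis using transfer_dual_long[OF fa \<open>c \<in> C\<close>] ev[OF \<open>c \<in> C\<close>] by simp
    next
      case False
      then have "length c = 1" using True by (cases c) (auto simp: codes_def Suc_le_eq)
      then obtain a where ca: "c = [a]" by (auto simp: length_Suc_conv)
      then have aE: "a \<in> E" using True by simp
      have "transfer_dual adj \<mu> c = (\<Sum>e\<in>{e. trn a e}. \<mu> [e])"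
        using transfer_dual_single[OF fa aE] ca by simp
      also have "\<dots> = (\<Sum>e\<in>{e. trn a e}. z * \<mu> [a, e])"
      proof (rule sum.cong)
        fix e assume "e \<in> {e. trn a e}"
        then have "[a, e] \<in> C" using codes_snoc[of "[a]" e] aE by simp
        then show "\<mu> [e] = z * \<mu> [a, e]" using ev[of "[a, e]"] by simp
      qed simp
      also have "\<dots> = z * \<mu> c" using FA_P_add[OF fa True] ca by (simp add: sum_distrib_left)
      finally show ?thesis .
    qed
  qed
  then show "\<mu> \<in> eigenspace_P adj z" using fa by (auto simp: eigenspace_P_def)
qed

lemma eigen_drop:
  assumes "\<mu> \<in> eigenspace_P adj z" "c \<in> C" "k < length c"
  shows "\<mu> (drop k c) = z ^ k * \<mu> c"
  using assms(3)
proof (induction k)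
  case (Suc k)
  have "drop k c \<in> C" using codes_drop assms Suc by auto
  moreover have "2 \<le> length (drop k c)" using Suc by auto
  ultimately have "\<mu> (tl (drop k c)) = z * \<mu> (drop k c)" using assms(1) eigenspace_P_iff by blast
  then show ?case using Suc by (simp add: drop_Suc tl_drop)
qed simp

section \<open>Extending postal codes backwards to the base vertex\<close>

definition forward_closed :: "('v \<times> 'v) set \<Rightarrow> bool" where
  "forward_closed K \<longleftrightarrow> K \<subseteq> E \<and> (\<forall>e\<in>K. \<forall>e'. trn e e' \<longrightarrow> e' \<in> K)"

lemma card_in_eq_out: "card {e\<in>E. snd e = v} = card {e\<in>E. fst e = v}"
proof -
  have inj: "inj_on rev_edge {e\<in>E. snd e = v}" by (rule inj_onI) (metis rev_edge_rev_edge)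
  have img: "rev_edge ` {e\<in>E. snd e = v} = {e\<in>E. fst e = v}"
  proof
    show "rev_edge ` {e\<in>E. snd e = v} \<subseteq> {e\<in>E. fst e = v}" using rev_edge_edges by auto
    show "{e\<in>E. fst e = v} \<subseteq> rev_edge ` {e\<in>E. snd e = v}"
    proof
      fix e assume "e \<in> {e\<in>E. fst e = v}"
      then show "e \<in> rev_edge ` {e\<in>E. snd e = v}"
        by (intro rev_image_eqI[of "rev_edge e"]) (auto simp: rev_edge_edges)
    qed
  qed
  show ?thesis using card_image[OF inj] img by simp
qed

lemma forward_closed_in_le_out:
  assumes K: "forward_closed K"
  shows "card {e\<in>K. snd e = v} \<le> card {e\<in>K. fst e = v}"
proof -
  have KE: "K \<subseteq> E" using K by (simp add: forward_closed_def)
  have fin: "finite {e\<in>K. snd e = v}" "finite {e\<in>K. fst e = v}"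
    using finite_subset[OF _ finite_edges] KE by auto
  show ?thesis
  proof (cases "{e\<in>K. snd e = v} = {}")
    case True then show ?thesis by (metis card.empty zero_le)
  next
    case False
    then obtain a where a: "(a, v) \<in> K" by auto
    show ?thesis
    proof (cases "\<exists>b. b \<noteq> a \<and> (b, v) \<in> K")
      case True
      then obtain b where b: "b \<noteq> a" "(b, v) \<in> K" by auto
      have "{e\<in>K. fst e = v} = {e\<in>E. fst e = v}"
      proof
        show "{e\<in>E. fst e = v} \<subseteq> {e\<in>K. fst e = v}"
        proof
          fix e assume e: "e \<in> {e\<in>E. fst e = v}"
          obtain w where w: "e = (v, w)" using e by (cases e) auto
          have "trn (a, v) e \<or> trn (b, v) e"
            using e w a b KE b(1) by (auto simp: turn_def rev_edge_def)
          then show "e \<in> {e\<in>K. fst e = v}" using K a b e unfolding forward_closed_def by blast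
        qed
      qed (use KE in auto)
      moreover have "card {e\<in>K. snd e = v} \<le> card {e\<in>E. snd e = v}"
        by (rule card_mono) (use finite_edges KE in auto)
      ultimately show ?thesis using card_in_eq_out by simp
    next
      case False
      then have S1: "{e\<in>K. snd e = v} = {(a, v)}" using a by auto
      obtain e' where e': "trn (a, v) e'" using turn_exists a KE by blast
      then have "e' \<in> K" using K a unfolding forward_closed_def by blast
      moreover have "fst e' = v" using e' by (simp add: turn_def)
      ultimately have "e' \<in> {e\<in>K. fst e = v}" by simp
      then have "card {e\<in>K. fst e = v} \<ge> 1"
        using fin by (metis One_nat_def Suc_leI card_gt_0_iff empty_iff)
      then show ?thesis using S1 by simp
    qed
  qed
qed

text \<open>At every vertex a forward-closed edge set has at most as many incoming as outgoing
  edges; both totals are its cardinality, so equality holds everywhere.\<close>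
lemma forward_closed_has_pred:
  assumes K: "forward_closed K" and e: "e \<in> K"
  shows "\<exists>e'\<in>K. snd e' = fst e"
proof -
  have KE: "K \<subseteq> E" using K by (simp add: forward_closed_def)
  have finK: "finite K" using finite_subset[OF KE finite_edges] .
  let ?i = "\<lambda>v. card {e\<in>K. snd e = v}" and ?o = "\<lambda>v. card {e\<in>K. fst e = v}"
  have part: "card K = (\<Sum>v\<in>V. card {e\<in>K. f e = v})" if fV: "\<And>e. e \<in> K \<Longrightarrow> f e \<in> V" for f :: "'v \<times> 'v \<Rightarrow> 'v"
  proof -
    have "K = (\<Union>v\<in>V. {e\<in>K. f e = v})" using fV by auto
    then have "card K = card (\<Union>v\<in>V. {e\<in>K. f e = v})" by simp
    also have "\<dots> = (\<Sum>v\<in>V. card {e\<in>K. f e = v})"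
      by (rule card_UN_disjoint) (use finite_V finK in auto)
    finally show ?thesis .
  qed
  have si: "card K = (\<Sum>v\<in>V. ?i v)" by (rule part) (use KE edges_vertices in auto)
  have so: "card K = (\<Sum>v\<in>V. ?o v)" by (rule part) (use KE edges_vertices in auto)
  have fV: "fst e \<in> V" using e KE edges_vertices[of e] by auto
  show ?thesis
  proof (rule ccontr)
    assume "\<not> ?thesis"
    then have "{x\<in>K. snd x = fst e} = {}" by auto
    then have "?i (fst e) = 0" by (metis card.empty)
    moreover have "?o (fst e) \<ge> 1"
    proof -
      have "e \<in> {x\<in>K. fst x = fst e}" using e by auto
      moreover have "finite {x\<in>K. fst x = fst e}" using finK by auto
      ultimately show ?thesis by (metis One_nat_def Suc_leI card_gt_0_iff empty_iff)
    qed
    ultimately have "?i (fst e) < ?o (fst e)" by simp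
    then have "(\<Sum>v\<in>V. ?i v) < (\<Sum>v\<in>V. ?o v)"
      using sum_strict_mono_ex1[OF finite_V, of ?i ?o] forward_closed_in_le_out[OF K] fV by blast
    then show False using si so by simp
  qed
qed

definition forward_set :: "'v \<times> 'v \<Rightarrow> ('v \<times> 'v) set" where
  "forward_set h = {e. \<exists>W\<in>C. hd W = h \<and> last W = e}"

lemma forward_set_closed:
  assumes "h \<in> E" shows "forward_closed (forward_set h)" "h \<in> forward_set h"
proof -
  show "h \<in> forward_set h" using assms unfolding forward_set_def
    by (intro CollectI bexI[of _ "[h]"]) auto
  have "forward_set h \<subseteq> E"
  proof
    fix e assume "e \<in> forward_set h"
    then obtain W where W: "W \<in> C" "last W = e" by (auto simp: forward_set_def)
    then show "e \<in> E" using codes_nth_edge[of W "length W - 1"]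
      by (auto simp: codes_def last_conv_nth)
  qed
  moreover have "\<forall>e\<in>forward_set h. \<forall>e'. trn e e' \<longrightarrow> e' \<in> forward_set h"
  proof (intro ballI allI impI)
    fix e e' assume "e \<in> forward_set h" "trn e e'"
    then obtain W where W: "W \<in> C" "hd W = h" "last W = e" by (auto simp: forward_set_def)
    then have "W @ [e'] \<in> C" using codes_snoc \<open>trn e e'\<close> by blast
    moreover have "hd (W @ [e']) = h" "last (W @ [e']) = e'" using W by (auto simp: codes_def)
    ultimately show "e' \<in> forward_set h" by (auto simp: forward_set_def)
  qed
  ultimately show "forward_closed (forward_set h)" by (simp add: forward_closed_def)
qed

text \<open>The end vertices of non-backtracking paths starting with \<open>h\<close> are closed under
  adjacency: the one forbidden continuation, back along the last edge \<open>e\<close>, is replaced by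
  an edge of \<^const>\<open>forward_set\<close> ending at the start of \<open>e\<close>.\<close>
lemma forward_code_to_base:
  assumes "h \<in> E" shows "\<exists>W\<in>C. hd W = h \<and> snd (last W) = v0"
proof -
  let ?T = "snd ` forward_set h"
  have cl: "y \<in> ?T \<Longrightarrow> adj y z \<Longrightarrow> z \<in> ?T" for y z
  proof -
    assume y: "y \<in> ?T" and yz: "adj y z"
    then obtain e where e: "e \<in> forward_set h" "snd e = y" by auto
    show "z \<in> ?T"
    proof (cases "z = fst e")
      case True
      then show ?thesis using forward_closed_has_pred[OF forward_set_closed(1)[OF assms] e(1)]
        by force
    next
      case False
      have "e \<in> E" using e forward_set_closed(1)[OF assms] by (auto simp: forward_closed_def)
      then have "trn e (y, z)" using False yz e by (auto simp: turn_def edges_def rev_edge_def)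
      then have "(y, z) \<in> forward_set h"
        using forward_set_closed(1)[OF assms] e unfolding forward_closed_def by blast
      then show ?thesis by force
    qed
  qed
  have "snd h \<in> V" using edges_vertices assms by auto
  then have "(snd h, v0) \<in> {(a, b). adj a b}\<^sup>*" using connected v0_in_V by blast
  then have "v0 \<in> ?T"
  proof (induction rule: rtrancl_induct)
    case base then show ?case using forward_set_closed(2)[OF assms] by blast
  next
    case (step y z) then show ?case using cl by auto
  qed
  then obtain e where "e \<in> forward_set h" "snd e = v0" by auto
  then show ?thesis by (auto simp: forward_set_def)
qed

lemma code_based_extension: assumes "c \<in> C" shows "\<exists>d. d @ c \<in> based_codes"
proof -
  have cne: "c \<noteq> []" and hE: "hd c \<in> E" using assms by (auto simp: codes_def)
  obtain W where W: "W \<in> C" "hd W = rev_edge (hd c)" "snd (last W) = v0"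
    using forward_code_to_base[OF rev_edge_edges[OF hE]] by blast
  have Wne: "W \<noteq> []" using W by (auto simp: codes_def)
  have invW: "path_inv W = path_inv (tl W) @ [hd c]"
    using Wne W(2) by (cases W) (auto simp: path_inv_def)
  show ?thesis
  proof (cases "tl W = []")
    case True
    then have "W = [rev_edge (hd c)]" using Wne W(2) by (cases W) auto
    then have "fst (hd c) = v0" using W(3) by simp
    then show ?thesis using assms by (intro exI[of _ "[]"]) (simp add: based_codes_def)
  next
    case False
    have "path_inv W \<in> C" using codes_path_inv W by blast
    then have "trn (last (path_inv (tl W))) (hd c)"
      using codes_appendD[of "path_inv (tl W)" "[hd c]"] invW False
      by (auto simp: path_inv_def)
    moreover have dC: "path_inv (tl W) \<in> C"
      using codes_appendD[of "path_inv (tl W)" "[hd c]"] invW False \<open>path_inv W \<in> C\<close>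
      by (auto simp: path_inv_def)
    ultimately have "path_inv (tl W) @ c \<in> C" using codes_append assms by blast
    moreover have "fst (hd (path_inv (tl W) @ c)) = v0"
    proof -
      have "hd (path_inv W) = rev_edge (last W)"
        using Wne by (simp add: path_inv_def hd_rev last_map)
      moreover have "hd (path_inv W) = hd (path_inv (tl W))"
        using invW False by (simp add: path_inv_def)
      moreover have "path_inv (tl W) \<noteq> []" using False by (simp add: path_inv_def)
      ultimately have "hd (path_inv (tl W) @ c) = rev_edge (last W)" by simp
      then show ?thesis using W(3) by simp
    qed
    ultimately show ?thesis by (auto simp: based_codes_def)
  qed
qed

section \<open>The deck action on districts\<close>

lemma Gamma_nonemptyD: assumes "g \<in> Gamma adj v0" "g \<noteq> []"
  shows "g \<in> C" "fst (g ! 0) = v0" "snd (g ! (length g - 1)) = v0"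
  using assms by (auto simp: Gamma_def tree_verts_def hd_conv_nth last_conv_nth)

lemma red_codes: "xs \<in> C \<or> xs = [] \<Longrightarrow> red xs = xs"
proof (induction xs)
  case (Cons e ys)
  show ?case
  proof (cases ys)
    case Nil then show ?thesis by simp
  next
    case (Cons f ys')
    have eys: "e # ys \<in> C" using Cons.prems by auto
    have "ys \<in> C" using codes_drop[OF eys, of 1] Cons by simp
    then have "red ys = ys" using Cons.IH by simp
    moreover have "f \<noteq> rev_edge e" using codes_turn[OF eys, of 0] Cons by (simp add: turn_def)
    ultimately show ?thesis using Cons by simp
  qed
qed simp

lemma codes_fst_nth_lcp:
  assumes "g \<in> C" "x \<in> C" "fst (g ! 0) = fst (x ! 0)" "lcp g x < length g" "lcp g x < length x"
  shows "fst (g ! lcp g x) = fst (x ! lcp g x)"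
proof (cases "lcp g x")
  case (Suc j)
  have "fst (g ! Suc j) = snd (g ! j)" using codes_adjacent[OF assms(1), of j] Suc assms(4) by simp
  also have "\<dots> = snd (x ! j)" using nth_less_lcp[of j g x] Suc by simp
  also have "\<dots> = fst (x ! Suc j)" using codes_adjacent[OF assms(2), of j] Suc assms(5) by simp
  finally show ?thesis using Suc by simp
qed (use assms(3) in simp)

lemma deck_pre_code_based_prefix:
  assumes g: "g \<in> Gamma adj v0" and x: "x \<in> based_codes" and lt: "length g < length x"
    and j: "lcp g x = length g"
  shows "deck_pre_code g x \<in> based_codes"
proof -
  let ?n = "length g"
  have xC: "x \<in> C" using x based_codes_codes by blast
  have "fst (hd (drop ?n x)) = v0"
  proof (cases "?n = 0")
    case True then show ?thesis using x by (simp add: based_codes_def)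
  next
    case False
    then have "g \<noteq> []" by auto
    have "snd (x ! (?n - 1)) = fst (x ! ?n)"
      using codes_adjacent[OF xC, of "?n - 1"] lt False by simp
    moreover have "x ! (?n - 1) = g ! (?n - 1)" using nth_less_lcp[of "?n - 1" g x] j False by simp
    ultimately show ?thesis using Gamma_nonemptyD[OF g \<open>g \<noteq> []\<close>] lt by (simp add: hd_drop_conv_nth)
  qed
  then show ?thesis using codes_drop[OF xC lt] j by (simp add: deck_pre_code_def based_codes_def)
qed

lemma deck_pre_code_based:
  assumes g: "g \<in> Gamma adj v0" and x: "x \<in> based_codes" and lt: "length g < length x"
  shows "deck_pre_code g x \<in> based_codes"
proof (cases "lcp g x = length g")
  case False
  let ?j = "lcp g x" and ?n = "length g"
  have xC: "x \<in> C" using x based_codes_codes by blast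
  have jlt: "?j < ?n" using False lcp_code_props[OF lt] by simp
  then have gne: "g \<noteq> []" by auto
  have gC: "g \<in> C" using Gamma_nonemptyD[OF g gne] by simp
  have A: "path_inv (drop ?j g) \<in> C" using codes_path_inv codes_drop[OF gC jlt] by blast
  have B: "drop ?j x \<in> C" using codes_drop[OF xC] jlt lt by simp
  have lastA: "last (path_inv (drop ?j g)) = rev_edge (g ! ?j)"
    using jlt by (simp add: path_inv_def last_rev hd_map hd_drop_conv_nth)
  have hdB: "hd (drop ?j x) = x ! ?j" using jlt lt by (simp add: hd_drop_conv_nth)
  have "fst (g ! 0) = fst (x ! 0)"
    using Gamma_nonemptyD(2)[OF g gne] x based_codes_nonempty[OF x]
      by (simp add: based_codes_def hd_conv_nth)
  then have fsts: "fst (g ! ?j) = fst (x ! ?j)" using codes_fst_nth_lcp[OF gC xC] jlt lt by simp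
  have "x ! ?j \<noteq> g ! ?j" using lcp_code_props(3)[OF lt jlt] by simp
  then have "trn (last (path_inv (drop ?j g))) (hd (drop ?j x))"
    using lastA hdB codes_nth_edge[OF gC jlt] codes_nth_edge[OF xC, of ?j] jlt lt fsts rev_edge_edges
    by (simp add: turn_def)
  then have "deck_pre_code g x \<in> C" using codes_append[OF A B] by (simp add: deck_pre_code_def)
  moreover have "hd (deck_pre_code g x) = rev_edge (last g)"
    using jlt by (simp add: deck_pre_code_def path_inv_def hd_rev last_map)
  ultimately show ?thesis using Gamma_nonemptyD[OF g gne] gne
    by (simp add: based_codes_def last_conv_nth)
qed (rule deck_pre_code_based_prefix[OF g x lt])

lemma lcp_path_inv_pref_district:
  assumes g: "g \<in> Gamma adj v0" and lt: "length g < length x" and x: "x \<in> C"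
    and w: "\<omega> \<in> P (deck_pre_code g x)"
  shows "lcp (path_inv g) (pref \<omega> (length g)) = length g - lcp g x"
proof (rule lcp_eqI)
  let ?j = "lcp g x" and ?n = "length g" and ?y = "deck_pre_code g x"
  have jn: "?j \<le> ?n" and jeq: "\<And>i. i < ?j \<Longrightarrow> g ! i = x ! i" using lcp_code_props[OF lt] by auto
  have ly: "length ?y = (?n - ?j) + (length x - ?j)" using length_deck_pre_code .
  have wy: "\<And>i. i < length ?y \<Longrightarrow> \<omega> i = ?y ! i" using w by (auto simp: district_def)
  show "?n - ?j \<le> length (path_inv g)" "?n - ?j \<le> length (pref \<omega> ?n)" by auto
  show "path_inv g ! i = pref \<omega> ?n ! i" if "i < ?n - ?j" for i
    using that wy[of i] ly deck_pre_code_nth_inv[OF lt that] by simp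
  show "path_inv g ! (?n - ?j) \<noteq> pref \<omega> ?n ! (?n - ?j)"
    if "?n - ?j < length (path_inv g)" "?n - ?j < length (pref \<omega> ?n)"
  proof -
    have j0: "0 < ?j" using that by simp
    have "path_inv g ! (?n - ?j) = rev_edge (g ! (?j - 1))"
      using that j0 jn by (simp add: path_inv_nth)
    also have "\<dots> = rev_edge (x ! (?j - 1))" using jeq[of "?j - 1"] j0 by simp
    finally have a: "path_inv g ! (?n - ?j) = rev_edge (x ! (?j - 1))" .
    have "pref \<omega> ?n ! (?n - ?j) = ?y ! (?n - ?j)" using that wy[of "?n - ?j"] ly lt jn by simp
    also have "\<dots> = x ! ?j" using deck_pre_code_nth_code[OF lt, of "?n - ?j"] by simp
    finally have b: "pref \<omega> ?n ! (?n - ?j) = x ! ?j" .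
    have "trn (x ! (?j - 1)) (x ! ?j)" using codes_turn[OF x, of "?j - 1"] j0 jn lt by simp
    then show ?thesis using a b by (auto simp: turn_def)
  qed
qed

lemma bd_act_in_district:
  assumes g: "g \<in> Gamma adj v0" and lt: "length g < length x" and x: "x \<in> C"
    and w: "\<omega> \<in> P (deck_pre_code g x)"
  shows "bd_act g \<omega> \<in> P x"
proof -
  let ?j = "lcp g x" and ?n = "length g" and ?y = "deck_pre_code g x"
  have jn: "?j \<le> ?n" and jeq: "\<And>i. i < ?j \<Longrightarrow> g ! i = x ! i" using lcp_code_props[OF lt] by auto
  have ly: "length ?y = (?n - ?j) + (length x - ?j)" using length_deck_pre_code .
  have wp: "\<omega> \<in> paths adj" and wy: "\<And>i. i < length ?y \<Longrightarrow> \<omega> i = ?y ! i"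
    using w by (auto simp: district_def)
  have r: "bd_act g \<omega> = (\<lambda>i. if i < ?j then g ! i else \<omega> (i - ?j + (?n - ?j)))"
  proof -
    have nn: "?n - (?n - ?j) = ?j" using jn by simp
    show ?thesis unfolding bd_act_eq lcp_path_inv_pref_district[OF g lt x w] nn ..
  qed
  have rx: "bd_act g \<omega> i = x ! i" if "i < length x" for i
  proof (cases "i < ?j")
    case True then show ?thesis using r jeq by simp
  next
    case False
    have idx: "i - ?j + (?n - ?j) < length ?y" using ly that False by simp
    have "bd_act g \<omega> i = ?y ! (i - ?j + (?n - ?j))" using r False wy[OF idx] by simp
    also have "\<dots> = x ! i" using deck_pre_code_nth_code[OF lt, of "i - ?j + (?n - ?j)"] False by simp
    finally show ?thesis .
  qed
  have "trn (bd_act g \<omega> i) (bd_act g \<omega> (Suc i))" for i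
  proof (cases "Suc i < length x")
    case True then show ?thesis using rx codes_turn[OF x True] by simp
  next
    case False
    then have "\<not> i < ?j" "\<not> Suc i < ?j" using lt jn by auto
    then show ?thesis using r paths_turn[OF wp] by (simp add: Suc_diff_le)
  qed
  then show ?thesis using rx by (simp add: district_def paths_def)
qed

lemma lcp_of_bd_act_in_district:
  assumes lt: "length g < length x" and wp: "\<omega> \<in> paths adj" and r: "bd_act g \<omega> \<in> P x"
  shows "lcp g x = length g - lcp (path_inv g) (pref \<omega> (length g))"
proof (rule lcp_eqI)
  let ?n = "length g" and ?k = "lcp (path_inv g) (pref \<omega> (length g))"
  have kn: "?k \<le> ?n" using lcp_le_length[of "path_inv g" "pref \<omega> ?n"] by simp
  have rx: "\<And>i. i < length x \<Longrightarrow> bd_act g \<omega> i = x ! i" using r by (simp add: district_def)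
  show "?n - ?k \<le> length g" "?n - ?k \<le> length x" using lt by auto
  show "g ! i = x ! i" if "i < ?n - ?k" for i using bd_act_eq[of g \<omega>] rx[of i] that lt by simp
  show "g ! (?n - ?k) \<noteq> x ! (?n - ?k)" if "?n - ?k < length g" "?n - ?k < length x"
  proof -
    have k0: "0 < ?k" using that by simp
    have "x ! (?n - ?k) = \<omega> ?k" using rx[of "?n - ?k"] that bd_act_eq[of g \<omega>] by simp
    moreover have "path_inv g ! (?k - 1) = rev_edge (g ! (?n - ?k))"
      using k0 kn by (simp add: path_inv_nth)
    moreover have "path_inv g ! (?k - 1) = \<omega> (?k - 1)"
      using nth_less_lcp[of "?k - 1" "path_inv g" "pref \<omega> ?n"] k0 kn by simp
    moreover have "trn (\<omega> (?k - 1)) (\<omega> ?k)" using paths_turn[OF wp, of "?k - 1"] k0 by simp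
    ultimately show ?thesis by (metis rev_edge_rev_edge turn_def)
  qed
qed

lemma district_deck_pre_code:
  assumes lt: "length g < length x" and wp: "\<omega> \<in> paths adj" and r: "bd_act g \<omega> \<in> P x"
  shows "\<omega> \<in> P (deck_pre_code g x)"
proof -
  let ?j = "lcp g x" and ?n = "length g" and ?y = "deck_pre_code g x"
    and ?k = "lcp (path_inv g) (pref \<omega> (length g))"
  have kn: "?k \<le> ?n" using lcp_le_length[of "path_inv g" "pref \<omega> ?n"] by simp
  have jk: "?j = ?n - ?k" by (rule lcp_of_bd_act_in_district[OF lt wp r])
  have rx: "\<And>i. i < length x \<Longrightarrow> bd_act g \<omega> i = x ! i" using r by (simp add: district_def)
  have ly: "length ?y = (?n - ?j) + (length x - ?j)" using length_deck_pre_code .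
  have "\<omega> i = ?y ! i" if i: "i < length ?y" for i
  proof (cases "i < ?n - ?j")
    case True
    then show ?thesis
      using deck_pre_code_nth_inv[OF lt True] nth_less_lcp[of i "path_inv g" "pref \<omega> ?n"] jk kn
        by simp
  next
    case False
    define i' where "i' = ?j + (i - (?n - ?j))"
    have yi: "?y ! i = x ! i'" using deck_pre_code_nth_code[OF lt] False by (simp add: i'_def)
    have i'x: "i' < length x" using i ly False by (simp add: i'_def)
    have "bd_act g \<omega> i' = \<omega> (i' - (?n - ?k) + ?k)" using jk bd_act_eq[of g \<omega>] by (simp add: i'_def)
    also have "i' - (?n - ?k) + ?k = i" using jk kn False by (simp add: i'_def)
    finally show ?thesis using rx[OF i'x] yi by simp
  qed
  then show ?thesis using wp by (simp add: district_def)
qed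

lemma bd_act_preimage_district:
  assumes g: "g \<in> Gamma adj v0" and x: "x \<in> based_codes" and lt: "length g < length x"
  shows "{\<omega>\<in>boundary. bd_act g \<omega> \<in> P x} = P (deck_pre_code g x)"
  using bd_act_in_district[OF g lt based_codes_codes[OF x]] district_deck_pre_code[OF lt]
    district_subset_boundary[OF deck_pre_code_based[OF g x lt]]
  by (auto simp: bd_def)

lemma deck_act_Gamma_Nil: "g \<in> Gamma adj v0 \<Longrightarrow> deck_act g [] = g"
  using Gamma_nonemptyD red_codes by (cases "g = []") (auto simp: deck_act_def)

lemma cocycle_district:
  assumes g: "g \<in> Gamma adj v0" and lt: "length g \<le> length x" and w: "\<omega> \<in> P x"
  shows "cocycle z g \<omega> = z powi (int (length g) - 2 * int (lcp g x))"
proof -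
  have "pref \<omega> (length g) = take (length g) x"
    using w lt by (simp add: district_iff pref_take[symmetric])
  then have "lcp g (pref \<omega> (length g)) = lcp g x"
    using lcp_take[of g "length g" x] lcp_le_length(1)[of g x] by simp
  then show ?thesis by (simp add: cocycle_def deck_act_Gamma_Nil[OF g] horo_Nil)
qed

definition deck_preimage :: "('v \<times> 'v) list \<Rightarrow> (nat \<Rightarrow> 'v \<times> 'v) set \<Rightarrow> (nat \<Rightarrow> 'v \<times> 'v) set" where
  "deck_preimage g A = {\<omega>\<in>boundary. bd_act g \<omega> \<in> A}"

lemma clopen_finite_common_level:
  assumes "finite S" "\<forall>B\<in>S. clopen B"
  shows "\<exists>N. \<forall>B\<in>S. level_union N B"
  using assms
proof (induction S rule: finite_induct)
  case empty then show ?case by simp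
next
  case (insert B S)
  then obtain N where N: "\<forall>B\<in>S. level_union N B" by auto
  obtain N' where "level_union N' B" "N' \<ge> N" using clopen_level_ge insert by blast
  then show ?case using N level_union_mono by blast
qed

lemma deck_preimage_clopen:
  assumes g: "g \<in> Gamma adj v0" and A: "clopen A"
  shows "clopen (deck_preimage g A)"
proof -
  obtain N where N: "level_union N A" "N \<ge> Suc (length g)" using clopen_level_ge A by blast
  have in_level: "\<And>x. x \<in> level_codes N A \<Longrightarrow> x \<in> based_codes \<and> length g < length x"
    using N by (auto simp: level_codes_def)
  have "deck_preimage g A = (\<Union>x\<in>level_codes N A. deck_preimage g (P x))"
    using N(1) unfolding deck_preimage_def level_union_def by blast
  also have "\<dots> = \<Union>(P ` deck_pre_code g ` level_codes N A)"
    using bd_act_preimage_district[OF g] in_level by (auto simp: deck_preimage_def)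
  finally show ?thesis
    using clopen_Union_districts finite_level_codes deck_pre_code_based[OF g] in_level
    by (metis (no_types, lifting) finite_imageI image_subsetI)
qed

lemma fa_push_FA_bd: assumes nu: "\<nu> \<in> FA_bd adj v0" and g: "g \<in> Gamma adj v0"
  shows "fa_push adj v0 g \<nu> \<in> FA_bd adj v0"
  unfolding FA_bd_def
proof (intro CollectI conjI allI impI)
  fix A assume "\<not> clopen A" then show "fa_push adj v0 g \<nu> A = 0" by (simp add: fa_push_def)
next
  fix A B assume ab: "clopen A" "clopen B" "A \<inter> B = {}"
  have "fa_push adj v0 g \<nu> (A \<union> B) = \<nu> (deck_preimage g (A \<union> B))"
    using clopen_Un[OF ab(1,2)] by (simp add: fa_push_def deck_preimage_def)
  also have "deck_preimage g (A \<union> B) = deck_preimage g A \<union> deck_preimage g B"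
    by (auto simp: deck_preimage_def)
  also have "\<nu> (deck_preimage g A \<union> deck_preimage g B) = \<nu> (deck_preimage g A) + \<nu> (deck_preimage g B)"
    by (rule FA_bd_add[OF nu deck_preimage_clopen[OF g ab(1)] deck_preimage_clopen[OF g ab(2)]]) (use ab(3) in \<open>auto simp: deck_preimage_def\<close>)
  finally show "fa_push adj v0 g \<nu> (A \<union> B) = fa_push adj v0 g \<nu> A + fa_push adj v0 g \<nu> B"
    using ab by (simp add: fa_push_def deck_preimage_def)
qed

lemma fa_push_district:
  assumes g: "g \<in> Gamma adj v0" and x: "x \<in> based_codes" and lt: "length g < length x"
  shows "fa_push adj v0 g \<nu> (P x) = \<nu> (P (deck_pre_code g x))"
  using bd_act_preimage_district[OF g x lt] clopen_district[OF x] by (simp add: fa_push_def)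

definition adapted_partition ::
    "((nat \<Rightarrow> 'v \<times> 'v) \<Rightarrow> complex) \<Rightarrow> (nat \<Rightarrow> 'v \<times> 'v) set \<Rightarrow> (nat \<Rightarrow> 'v \<times> 'v) set set \<Rightarrow> bool"
  where "adapted_partition f A Q \<longleftrightarrow> finite Q \<and> (\<forall>B\<in>Q. clopen B \<and> B \<noteq> {}) \<and>
      (\<forall>B\<in>Q. \<forall>B'\<in>Q. B \<noteq> B' \<longrightarrow> B \<inter> B' = {}) \<and> \<Union>Q = A \<and>
      (\<forall>B\<in>Q. \<forall>x\<in>B. \<forall>y\<in>B. f x = f y)"

lemma adapted_partition_level_codes:
  assumes N: "level_union N A" and f: "\<forall>x\<in>level_codes N A. \<forall>y\<in>P x. \<forall>y'\<in>P x. f y = f y'"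
  shows "adapted_partition f A (P ` level_codes N A)"
  unfolding adapted_partition_def
proof (intro conjI ballI impI)
  show "finite (P ` level_codes N A)" using finite_level_codes by simp
  fix B assume "B \<in> P ` level_codes N A"
  then obtain x where x: "x \<in> level_codes N A" "B = P x" by auto
  then have xV: "x \<in> based_codes" by (simp add: level_codes_def)
  show "clopen B" using clopen_district xV x by simp
  show "B \<noteq> {}" using district_point[OF based_codes_codes[OF xV]] x by blast
  show "f y = f y'" if "y \<in> B" "y' \<in> B" for y y' using f x that by blast
next
  fix B B' assume "B \<in> P ` level_codes N A" "B' \<in> P ` level_codes N A" "B \<noteq> B'"
  then obtain x x' where "x \<in> level_codes N A" "x' \<in> level_codes N A" "B = P x" "B' = P x'" "x \<noteq> x'"
    by auto
  then show "B \<inter> B' = {}" using district_disjoint by (auto simp: level_codes_def)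
next
  show "\<Union>(P ` level_codes N A) = A" using N by (simp add: level_union_def)
qed

lemma UN_level_codes:
  assumes "\<forall>B\<in>Q. level_union N B" "\<Union>Q = A"
  shows "(\<Union>B\<in>Q. level_codes N B) = level_codes N A"
proof
  show "(\<Union>B\<in>Q. level_codes N B) \<subseteq> level_codes N A" using assms(2) by (auto simp: level_codes_def)
  show "level_codes N A \<subseteq> (\<Union>B\<in>Q. level_codes N B)"
  proof
    fix c assume c: "c \<in> level_codes N A"
    then have cV: "c \<in> based_codes" "length c = N" "P c \<subseteq> A" by (auto simp: level_codes_def)
    obtain p where p: "p \<in> P c" using district_point based_codes_codes cV by blast
    then obtain B where B: "B \<in> Q" "p \<in> B" using cV assms(2) by blast
    then have "P c \<subseteq> B" using level_union_district_cases[OF _ cV(1) cV(2), of B] assms(1) p by blast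
    then show "c \<in> (\<Union>B\<in>Q. level_codes N B)" using B cV by (auto simp: level_codes_def)
  qed
qed

lemma adapted_partition_sum:
  assumes m: "m \<in> FA_bd adj v0" and Q: "adapted_partition f A Q" and N: "\<forall>B\<in>Q. level_union N B"
  shows "(\<Sum>B\<in>Q. f (SOME x. x \<in> B) * m B) = (\<Sum>c\<in>level_codes N A. f (district_point c) * m (P c))"
proof -
  have fQ: "finite Q" and nemp: "\<And>B. B \<in> Q \<Longrightarrow> B \<noteq> {}"
    and dj: "\<And>B B'. B \<in> Q \<Longrightarrow> B' \<in> Q \<Longrightarrow> B \<noteq> B' \<Longrightarrow> B \<inter> B' = {}" and un: "\<Union>Q = A"
    and cst: "\<And>B x y. B \<in> Q \<Longrightarrow> x \<in> B \<Longrightarrow> y \<in> B \<Longrightarrow> f x = f y"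
    using Q unfolding adapted_partition_def by blast+
  have piece: "f (SOME x. x \<in> B) * m B = (\<Sum>c\<in>level_codes N B. f (district_point c) * m (P c))"
    if B: "B \<in> Q" for B
  proof -
    have "f (SOME x. x \<in> B) * m B = (\<Sum>c\<in>level_codes N B. f (SOME x. x \<in> B) * m (P c))"
      using FA_bd_level_sum[OF m, of N B] N B by (simp add: sum_distrib_left)
    also have "\<dots> = (\<Sum>c\<in>level_codes N B. f (district_point c) * m (P c))"
    proof (rule sum.cong)
      fix c assume "c \<in> level_codes N B"
      then have "district_point c \<in> B"
        using district_point[of c] by (auto simp: level_codes_def based_codes_def)
      moreover have "(SOME x. x \<in> B) \<in> B" using nemp[OF B] by (simp add: some_in_eq)
      ultimately show "f (SOME x. x \<in> B) * m (P c) = f (district_point c) * m (P c)"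
        using cst[OF B] by metis
    qed simp
    finally show ?thesis .
  qed
  have "(\<Sum>B\<in>Q. f (SOME x. x \<in> B) * m B) = (\<Sum>B\<in>Q. \<Sum>c\<in>level_codes N B. f (district_point c) * m (P c))"
    using piece by simp
  also have "\<dots> = (\<Sum>c\<in>(\<Union>B\<in>Q. level_codes N B). f (district_point c) * m (P c))"
    using fQ finite_level_codes dj level_codes_disjoint
      by (intro sum.UNION_disjoint[symmetric]) auto
  also have "\<dots> = (\<Sum>c\<in>level_codes N A. f (district_point c) * m (P c))"
    using UN_level_codes[OF N un] by simp
  finally show ?thesis .
qed

lemma fa_int_eq:
  assumes m: "m \<in> FA_bd adj v0" and v: "adapted_partition f A Q"
  shows "fa_int adj v0 m f A = (\<Sum>B\<in>Q. f (SOME x. x \<in> B) * m B)"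
proof -
  have ex: "\<exists>s Q. adapted_partition f A Q \<and> s = (\<Sum>B\<in>Q. f (SOME x. x \<in> B) * m B)" using v by blast
  define s where "s = fa_int adj v0 m f A"
  have alt: "fa_int adj v0 m f A = (SOME s. \<exists>Q. adapted_partition f A Q \<and> s = (\<Sum>B\<in>Q. f (SOME x. x \<in> B) * m B))"
    by (simp add: fa_int_def adapted_partition_def conj_assoc)
  have "\<exists>Q. adapted_partition f A Q \<and> s = (\<Sum>B\<in>Q. f (SOME x. x \<in> B) * m B)"
    unfolding s_def alt using someI_ex[OF ex] .
  then obtain Q' where Q': "adapted_partition f A Q'" "s = (\<Sum>B\<in>Q'. f (SOME x. x \<in> B) * m B)"
    by blast
  have "finite (Q \<union> Q')" "\<forall>B\<in>Q \<union> Q'. clopen B" using v Q'(1) unfolding adapted_partition_def by auto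
  then obtain N where N: "\<forall>B\<in>Q \<union> Q'. level_union N B" using clopen_finite_common_level by blast
  have "s = (\<Sum>c\<in>level_codes N A. f (district_point c) * m (P c))"
    using adapted_partition_sum[OF m Q'(1)] N Q'(2) by simp
  moreover have "(\<Sum>B\<in>Q. f (SOME x. x \<in> B) * m B) = (\<Sum>c\<in>level_codes N A. f (district_point c) * m (P c))"
    using adapted_partition_sum[OF m v] N by simp
  ultimately show ?thesis by (simp add: s_def)
qed

lemma pi_z_level_sum:
  assumes nu: "\<nu> \<in> FA_bd adj v0" and g: "g \<in> Gamma adj v0" and N: "level_union N A" "length g < N"
  shows "pi_z adj v0 z g \<nu> A = (\<Sum>x\<in>level_codes N A. z powi (int (length g) - 2 * int (lcp g x)) * \<nu> (P (deck_pre_code g x)))"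
proof -
  have cl: "clopen A" using N clopen_iff_level_union by blast
  have in_level: "\<And>x. x \<in> level_codes N A \<Longrightarrow> x \<in> based_codes \<and> length g < length x \<and> length x = N \<and> P x \<subseteq> A"
    using N by (auto simp: level_codes_def)
  let ?Q = "P ` level_codes N A"
  have v: "adapted_partition (cocycle z g) A ?Q"
  proof (rule adapted_partition_level_codes[OF N(1)], intro ballI)
    fix x y y' assume x: "x \<in> level_codes N A" and "y \<in> P x" "y' \<in> P x"
    then show "cocycle z g y = cocycle z g y'"
      using cocycle_district[OF g, of x y] cocycle_district[OF g, of x y'] in_level[OF x] by simp
  qed
  have inj: "inj_on P (level_codes N A)"
    unfolding inj_on_def using district_inj in_level based_codes_codes by metis
  have "pi_z adj v0 z g \<nu> A = (\<Sum>B\<in>?Q. cocycle z g (SOME x. x \<in> B) * fa_push adj v0 g \<nu> B)"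
    using fa_int_eq[OF fa_push_FA_bd[OF nu g] v] cl by (simp add: pi_z_def)
  also have "\<dots> = (\<Sum>x\<in>level_codes N A. cocycle z g (SOME y. y \<in> P x) * fa_push adj v0 g \<nu> (P x))"
    by (simp add: sum.reindex[OF inj])
  also have "\<dots> = (\<Sum>x\<in>level_codes N A. z powi (int (length g) - 2 * int (lcp g x)) * \<nu> (P (deck_pre_code g x)))"
  proof (rule sum.cong)
    fix x assume x: "x \<in> level_codes N A"
    have "(SOME y. y \<in> P x) \<in> P x"
      using district_point[of x] in_level[OF x] based_codes_codes by (simp add: district_point_def)
    then show "cocycle z g (SOME y. y \<in> P x) * fa_push adj v0 g \<nu> (P x) = z powi (int (length g) - 2 * int (lcp g x)) * \<nu> (P (deck_pre_code g x))"
      using cocycle_district[OF g] fa_push_district[OF g] in_level[OF x] by simp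
  qed simp
  finally show ?thesis .
qed

lemma pi_z_district:
  assumes nu: "\<nu> \<in> FA_bd adj v0" and g: "g \<in> Gamma adj v0" and x: "x \<in> based_codes" "length g < length x"
  shows "pi_z adj v0 z g \<nu> (P x) = z powi (int (length g) - 2 * int (lcp g x)) * \<nu> (P (deck_pre_code g x))"
  using pi_z_level_sum[OF nu g level_union_district(1)[OF x(1)] x(2)] level_union_district(2)[OF x(1)]
    by simp

lemma pi_z_fixed_of_districts:
  assumes nu: "\<nu> \<in> FA_bd adj v0" and g: "g \<in> Gamma adj v0"
    and deep: "\<And>x. x \<in> based_codes \<Longrightarrow> length g < length x \<Longrightarrow> pi_z adj v0 z g \<nu> (P x) = \<nu> (P x)"
  shows "pi_z adj v0 z g \<nu> = \<nu>"
proof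
  fix A show "pi_z adj v0 z g \<nu> A = \<nu> A"
  proof (cases "clopen A")
    case False then show ?thesis using FA_bd_zero[OF nu False] by (simp add: pi_z_def)
  next
    case True
    then obtain N where N: "level_union N A" "N \<ge> Suc (length g)" using clopen_level_ge by blast
    then have "pi_z adj v0 z g \<nu> A = (\<Sum>x\<in>level_codes N A. z powi (int (length g) - 2 * int (lcp g x)) * \<nu> (P (deck_pre_code g x)))"
      using pi_z_level_sum[OF nu g N(1)] by simp
    also have "\<dots> = (\<Sum>x\<in>level_codes N A. \<nu> (P x))"
      by (rule sum.cong) (use deep pi_z_district[OF nu g] N in \<open>auto simp: level_codes_def\<close>)
    also have "\<dots> = \<nu> A" using FA_bd_level_sum[OF nu N(1)] by simp
    finally show ?thesis .
  qed
qed

lemma FA_bd_lincomb: assumes "\<nu>1 \<in> FA_bd adj v0" "\<nu>2 \<in> FA_bd adj v0"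
  shows "(\<lambda>A. a * \<nu>1 A + b * \<nu>2 A) \<in> FA_bd adj v0"
  using assms unfolding FA_bd_def by (auto simp: algebra_simps)

lemma Res_eigenspace_invariant: assumes z: "z \<noteq> 0" and mu: "\<mu> \<in> eigenspace_P adj z"
  shows "Res adj v0 \<mu> \<in> FA_bd_inv adj v0 z"
proof -
  have fa: "\<mu> \<in> FA_P adj" using mu eigenspace_P_iff by blast
  have nu: "Res adj v0 \<mu> \<in> FA_bd adj v0" and val: "\<forall>c\<in>based_codes. Res adj v0 \<mu> (P c) = \<mu> c"
    using Res_FA_bd[OF fa] Res_district[OF fa] by auto
  have "pi_z adj v0 z g (Res adj v0 \<mu>) = Res adj v0 \<mu>" if g: "g \<in> Gamma adj v0" for g
  proof (rule pi_z_fixed_of_districts[OF nu g])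
    fix x assume x: "x \<in> based_codes" and lt: "length g < length x"
    let ?n = "length g" and ?j = "lcp g x" and ?y = "deck_pre_code g x"
    have yV: "?y \<in> based_codes" using deck_pre_code_based[OF g x lt] .
    have jn: "?j \<le> ?n" using lcp_code_props[OF lt] by simp
    have "drop (?n - ?j) ?y = drop ?j x" by (simp add: deck_pre_code_def)
    moreover have "\<mu> (drop (?n - ?j) ?y) = z ^ (?n - ?j) * \<mu> ?y"
      using eigen_drop[OF mu based_codes_codes[OF yV], of "?n - ?j"] length_deck_pre_code[of g x] lt jn
        by simp
    moreover have "\<mu> (drop ?j x) = z ^ ?j * \<mu> x"
      using eigen_drop[OF mu based_codes_codes[OF x], of ?j] lt jn by simp
    ultimately have e: "z ^ (?n - ?j) * \<mu> ?y = z ^ ?j * \<mu> x" by simp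
    have "z powi (int ?n - 2 * int ?j) * Res adj v0 \<mu> (P ?y) = z ^ (?n - ?j) * \<mu> ?y / z ^ ?j"
      using power_int_diff_twice[OF z jn] val yV by simp
    also have "\<dots> = \<mu> x" using e z by (simp add: field_simps)
    also have "\<dots> = Res adj v0 \<mu> (P x)" using val x by simp
    finally show "pi_z adj v0 z g (Res adj v0 \<mu>) (P x) = Res adj v0 \<mu> (P x)"
      using pi_z_district[OF nu g x lt] by simp
  qed
  then show ?thesis using nu by (simp add: FA_bd_inv_def)
qed

lemma inj_on_Res_eigenspace: "inj_on (Res adj v0) (eigenspace_P adj z)"
proof (rule inj_onI, rule ext)
  fix \<mu>1 \<mu>2 c
  assume mu: "\<mu>1 \<in> eigenspace_P adj z" "\<mu>2 \<in> eigenspace_P adj z"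
    and eq: "Res adj v0 \<mu>1 = Res adj v0 \<mu>2"
  have fa: "\<mu>1 \<in> FA_P adj" "\<mu>2 \<in> FA_P adj" using mu eigenspace_P_iff by blast+
  show "\<mu>1 c = \<mu>2 c"
  proof (cases "c \<in> C")
    case False then show ?thesis using FA_P_zero fa by metis
  next
    case True
    then obtain d where d: "d @ c \<in> based_codes" using code_based_extension by blast
    have ne: "c \<noteq> []" using True by (simp add: codes_def)
    have "\<mu>1 c = z ^ length d * \<mu>1 (d @ c)" "\<mu>2 c = z ^ length d * \<mu>2 (d @ c)"
      using eigen_drop[OF mu(1) based_codes_codes[OF d], of "length d"]
        eigen_drop[OF mu(2) based_codes_codes[OF d], of "length d"] ne
      by auto
    moreover have "\<mu>1 (d @ c) = \<mu>2 (d @ c)"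
      using Res_district[OF fa(1)] Res_district[OF fa(2)] eq d by metis
    ultimately show ?thesis by simp
  qed
qed

lemma Res_lincomb: assumes "\<mu> \<in> eigenspace_P adj z" "\<mu>' \<in> eigenspace_P adj z"
  shows "Res adj v0 (\<lambda>c. a * \<mu> c + b * \<mu>' c) = (\<lambda>A. a * Res adj v0 \<mu> A + b * Res adj v0 \<mu>' A)"
proof (rule Res_eqI)
  have fa: "\<mu> \<in> FA_P adj" "\<mu>' \<in> FA_P adj" using assms eigenspace_P_iff by blast+
  show "(\<lambda>A. a * Res adj v0 \<mu> A + b * Res adj v0 \<mu>' A) \<in> FA_bd adj v0"
    using FA_bd_lincomb Res_FA_bd fa by blast
  show "\<forall>c\<in>based_codes. a * Res adj v0 \<mu> (P c) + b * Res adj v0 \<mu>' (P c) = a * \<mu> c + b * \<mu>' c"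
    using Res_district fa by simp
qed

section \<open>Surjectivity of the restriction\<close>

definition extensions :: "nat \<Rightarrow> ('v \<times> 'v) list \<Rightarrow> ('v \<times> 'v) list set" where
  "extensions M c = {c' \<in> C. length c' = M \<and> take (length c) c' = c}"

lemma append_extensions_based:
  assumes dc: "d @ c \<in> based_codes" and cC: "c \<in> C" and c': "c' \<in> extensions M c"
  shows "d @ c' \<in> based_codes"
proof -
  have cne: "c \<noteq> []" using cC by (simp add: codes_def)
  have dcC: "d @ c \<in> C" using dc based_codes_codes by blast
  have c'C: "c' \<in> C" "take (length c) c' = c" using c' by (auto simp: extensions_def)
  have c'ne: "c' \<noteq> []" using c'C by (simp add: codes_def)
  have "hd (take (length c) c') = hd c'" using cne c'ne by (simp add: hd_take)
  then have hd: "hd c' = hd c" using c'C(2) by simp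
  have "d @ c' \<in> C"
  proof (cases "d = []")
    case True then show ?thesis using c'C by simp
  next
    case False
    then have "trn (last d) (hd c)" using codes_appendD[OF dcC False cne] by simp
    then show ?thesis using codes_append[of d c'] codes_appendD[OF dcC False cne] c'C hd by simp
  qed
  moreover have "fst (hd (d @ c')) = v0"
    using dc hd cne c'ne by (cases d) (auto simp: based_codes_def)
  ultimately show ?thesis by (simp add: based_codes_def)
qed

lemma level_codes_district_append:
  assumes dc: "d @ c \<in> based_codes" and cC: "c \<in> C" and M: "length c \<le> M"
  shows "level_codes (length d + M) (P (d @ c)) = (\<lambda>c'. d @ c') ` extensions M c"
proof -
  have cne: "c \<noteq> []" using cC by (simp add: codes_def)
  have dcC: "d @ c \<in> C" using dc based_codes_codes by blast
  show ?thesis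
  proof
    show "level_codes (length d + M) (P (d @ c)) \<subseteq> (\<lambda>c'. d @ c') ` extensions M c"
    proof
      fix x assume "x \<in> level_codes (length d + M) (P (d @ c))"
      then have x: "x \<in> based_codes" "length x = length d + M" "P x \<subseteq> P (d @ c)"
        by (auto simp: level_codes_def)
      then have tk: "take (length (d @ c)) x = d @ c"
        using district_subset_iff[OF dcC based_codes_codes[OF x(1)]] M by simp
      have "take (length d) x = d"
        using arg_cong[OF tk, of "take (length d)"] by (simp add: min_def)
      then have xd: "x = d @ drop (length d) x" by (metis append_take_drop_id)
      have "0 < M" using cne M by (cases c) auto
      then have "drop (length d) x \<in> C"
        using codes_drop[OF based_codes_codes[OF x(1)], of "length d"] x(2) by simp
      moreover have "take (length c) (drop (length d) x) = c"
      proof -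
        have "take (length c) (drop (length d) x) = drop (length d) (take (length c + length d) x)"
          by (simp add: take_drop)
        also have "\<dots> = drop (length d) (d @ c)" using tk by (simp add: add.commute)
        finally show ?thesis by simp
      qed
      ultimately have "drop (length d) x \<in> extensions M c" using x(2) by (simp add: extensions_def)
      then show "x \<in> (\<lambda>c'. d @ c') ` extensions M c" using xd by blast
    qed
    show "(\<lambda>c'. d @ c') ` extensions M c \<subseteq> level_codes (length d + M) (P (d @ c))"
    proof clarify
      fix c' assume c': "c' \<in> extensions M c"
      then have V: "d @ c' \<in> based_codes" using append_extensions_based[OF dc cC] by blast
      have "take (length (d @ c)) (d @ c') = d @ c" using c' by (simp add: extensions_def)
      then have "P (d @ c') \<subseteq> P (d @ c)"
        using district_subset_iff[OF dcC based_codes_codes[OF V]] c' M by (simp add: extensions_def)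
      then show "d @ c' \<in> level_codes (length d + M) (P (d @ c))"
        using V c' by (simp add: level_codes_def extensions_def)
    qed
  qed
qed

lemma FA_bd_extensions:
  assumes nu: "\<nu> \<in> FA_bd adj v0" and dc: "d @ c \<in> based_codes" and cC: "c \<in> C" and M: "length c \<le> M"
  shows "\<nu> (P (d @ c)) = (\<Sum>c'\<in>extensions M c. \<nu> (P (d @ c')))"
proof -
  have "level_union (length d + M) (P (d @ c))"
    using level_union_mono[OF level_union_district(1)[OF dc]] M by simp
  then have "\<nu> (P (d @ c)) = (\<Sum>x\<in>level_codes (length d + M) (P (d @ c)). \<nu> (P x))"
    using FA_bd_level_sum[OF nu] by blast
  also have "\<dots> = (\<Sum>c'\<in>extensions M c. \<nu> (P (d @ c')))"
    unfolding level_codes_district_append[OF dc cC M] by (simp add: sum.reindex inj_on_def)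
  finally show ?thesis .
qed

lemma based_code_split:
  assumes "d @ c \<in> based_codes" "d \<noteq> []" "c \<noteq> []"
  shows "d \<in> C" "trn (last d) (hd c)" "fst (hd d) = v0" "snd (last d) = fst (hd c)"
  using codes_appendD[OF based_codes_codes[OF assms(1)] assms(2,3)] assms
  by (auto simp: based_codes_def turn_def)

lemma loop_Gamma:
  assumes v1: "d1 @ c \<in> based_codes" and v2: "d2 @ c \<in> based_codes" and cne: "c \<noteq> []"
    and cond: "d1 = [] \<or> d2 = [] \<or> last d1 \<noteq> last d2"
  shows "d2 @ path_inv d1 \<in> Gamma adj v0"
proof -
  let ?g = "d2 @ path_inv d1"
  have c0: "d = [] \<Longrightarrow> d @ c \<in> based_codes \<Longrightarrow> fst (hd c) = v0" for d by (simp add: based_codes_def)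
  have hi: "hd (path_inv d1) = rev_edge (last d1)" "last (path_inv d1) = rev_edge (hd d1)" if "d1 \<noteq> []"
    using that by (simp_all add: path_inv_def hd_rev last_rev hd_map last_map)
  consider "d1 = []" "d2 = []" | "d1 = []" "d2 \<noteq> []" | "d1 \<noteq> []" "d2 = []" | "d1 \<noteq> []" "d2 \<noteq> []"
    by blast
  then have "?g = [] \<or> ?g \<in> C \<and> fst (hd ?g) = v0 \<and> snd (last ?g) = v0"
  proof cases
    case 2
    then show ?thesis using based_code_split[OF v2 _ cne] c0[OF _ v1] by simp
  next
    case 3
    then show ?thesis using based_code_split[OF v1 _ cne] c0[OF _ v2] codes_path_inv hi by simp
  next
    case 4
    have f1: "d1 \<in> C" "trn (last d1) (hd c)" "fst (hd d1) = v0"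
      using based_code_split[OF v1 4(1) cne] by auto
    have f2: "d2 \<in> C" "trn (last d2) (hd c)" "fst (hd d2) = v0"
      using based_code_split[OF v2 4(2) cne] by auto
    have "trn (last d2) (hd (path_inv d1))"
      using f1 f2 cond 4 hi turn_edges rev_edge_edges unfolding turn_def
      by (metis rev_edge_fst rev_edge_rev_edge)
    then have "?g \<in> C" using codes_append[OF f2(1) codes_path_inv[OF f1(1)]] by simp
    then show ?thesis using f1 f2 hi 4 by (simp add: path_inv_def)
  qed simp
  then show ?thesis by (auto simp: Gamma_def tree_verts_def)
qed

lemma deck_pre_code_loop:
  assumes v1: "d1 @ c \<in> based_codes" and cne: "c \<noteq> []"
  shows "lcp (d2 @ path_inv d1) (d2 @ c) = length d2"
    and "deck_pre_code (d2 @ path_inv d1) (d2 @ c) = d1 @ c"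
proof -
  let ?g = "d2 @ path_inv d1" and ?x = "d2 @ c"
  show lcp: "lcp ?g ?x = length d2"
  proof (rule lcp_eqI)
    show "length d2 \<le> length ?g" "length d2 \<le> length ?x" by auto
    show "?g ! i = ?x ! i" if "i < length d2" for i using that by (simp add: nth_append)
    show "?g ! length d2 \<noteq> ?x ! length d2" if "length d2 < length ?g" "length d2 < length ?x"
    proof -
      have d1ne: "d1 \<noteq> []" using that by auto
      have "?g ! length d2 = rev_edge (last d1)"
        using d1ne by (simp add: nth_append path_inv_nth last_conv_nth)
      moreover have "?x ! length d2 = hd c" using cne by (simp add: nth_append hd_conv_nth)
      moreover have "trn (last d1) (hd c)" using based_code_split[OF v1 d1ne cne] by simp
      ultimately show ?thesis by (auto simp: turn_def)
    qed
  qed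
  show "deck_pre_code ?g ?x = d1 @ c" unfolding deck_pre_code_def lcp by simp
qed

lemma scaled_value_eq_long:
  assumes nu: "\<nu> \<in> FA_bd_inv adj v0 z" and z: "z \<noteq> 0"
    and v1: "d1 @ c \<in> based_codes" and v2: "d2 @ c \<in> based_codes" and cC: "c \<in> C"
    and lt: "length d1 + length d2 < length c"
    and cond: "d1 = [] \<or> d2 = [] \<or> last d1 \<noteq> last d2"
  shows "z ^ length d1 * \<nu> (P (d1 @ c)) = z ^ length d2 * \<nu> (P (d2 @ c))"
proof -
  let ?g = "d2 @ path_inv d1"
  have cne: "c \<noteq> []" using cC by (simp add: codes_def)
  have nuFA: "\<nu> \<in> FA_bd adj v0" and fixed: "\<And>g. g \<in> Gamma adj v0 \<Longrightarrow> pi_z adj v0 z g \<nu> = \<nu>"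
    using nu by (auto simp: FA_bd_inv_def)
  have gG: "?g \<in> Gamma adj v0" using loop_Gamma[OF v1 v2 cne cond] .
  have lg: "length ?g = length d1 + length d2" by simp
  have "\<nu> (P (d2 @ c)) = pi_z adj v0 z ?g \<nu> (P (d2 @ c))" using fixed[OF gG] by simp
  also have "\<dots> = z powi (int (length ?g) - 2 * int (length d2)) * \<nu> (P (d1 @ c))"
    using pi_z_district[OF nuFA gG v2] lt deck_pre_code_loop[OF v1 cne] by simp
  also have "z powi (int (length ?g) - 2 * int (length d2)) = z ^ length d1 / z ^ length d2"
    using power_int_diff_twice[OF z, of "length d2" "length ?g"] lg by simp
  finally show ?thesis using z by (simp add: field_simps)
qed

text \<open>Refining \<open>c\<close> to long extensions makes \<open>scaled_value_eq_long\<close> applicable.\<close>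
lemma scaled_value_eq_base:
  assumes nu: "\<nu> \<in> FA_bd_inv adj v0 z" and z: "z \<noteq> 0"
    and v1: "d1 @ c \<in> based_codes" and v2: "d2 @ c \<in> based_codes" and cC: "c \<in> C"
    and cond: "d1 = [] \<or> d2 = [] \<or> last d1 \<noteq> last d2"
  shows "z ^ length d1 * \<nu> (P (d1 @ c)) = z ^ length d2 * \<nu> (P (d2 @ c))"
proof -
  have nuFA: "\<nu> \<in> FA_bd adj v0" using nu by (simp add: FA_bd_inv_def)
  define M where "M = length c + length d1 + length d2 + 1"
  have M: "length c \<le> M" by (simp add: M_def)
  have "z ^ length d1 * \<nu> (P (d1 @ c)) = (\<Sum>c'\<in>extensions M c. z ^ length d1 * \<nu> (P (d1 @ c')))"
    using FA_bd_extensions[OF nuFA v1 cC M] by (simp add: sum_distrib_left)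
  also have "\<dots> = (\<Sum>c'\<in>extensions M c. z ^ length d2 * \<nu> (P (d2 @ c')))"
  proof (rule sum.cong)
    fix c' assume c': "c' \<in> extensions M c"
    show "z ^ length d1 * \<nu> (P (d1 @ c')) = z ^ length d2 * \<nu> (P (d2 @ c'))"
    proof (rule scaled_value_eq_long[OF nu z])
      show "d1 @ c' \<in> based_codes" using append_extensions_based[OF v1 cC c'] .
      show "d2 @ c' \<in> based_codes" using append_extensions_based[OF v2 cC c'] .
      show "c' \<in> C" "length d1 + length d2 < length c'"
        using c' by (auto simp: extensions_def M_def)
      show "d1 = [] \<or> d2 = [] \<or> last d1 \<noteq> last d2" by (rule cond)
    qed
  qed simp
  also have "\<dots> = z ^ length d2 * \<nu> (P (d2 @ c))"
    using FA_bd_extensions[OF nuFA v2 cC M] by (simp add: sum_distrib_left)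
  finally show ?thesis .
qed

text \<open>If \<open>d\<^sub>1\<close> and \<open>d\<^sub>2\<close> end in the same edge, that edge moves into \<open>c\<close>; otherwise the
  loop \<open>d\<^sub>2 d\<^sub>1\<^sup>-\<^sup>1\<close> is reduced and invariance under it applies.\<close>
lemma scaled_value_eq:
  assumes nu: "\<nu> \<in> FA_bd_inv adj v0 z" and z: "z \<noteq> 0"
  shows "c \<in> C \<Longrightarrow> d1 @ c \<in> based_codes \<Longrightarrow> d2 @ c \<in> based_codes \<Longrightarrow>
    z ^ length d1 * \<nu> (P (d1 @ c)) = z ^ length d2 * \<nu> (P (d2 @ c))"
proof (induction d1 arbitrary: d2 c rule: rev_induct)
  case Nil then show ?case using scaled_value_eq_base[OF nu z, of "[]" c d2] by simp
next
  case (snoc e d1')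
  show ?case
  proof (cases "d2 \<noteq> [] \<and> last d2 = e")
    case True
    define d2' where "d2' = butlast d2"
    have d2: "d2 = d2' @ [e]" using True append_butlast_last_id[of d2] by (simp add: d2'_def)
    have ec: "e # c \<in> C"
    proof -
      have "(d1' @ [e]) @ c \<in> C" using snoc.prems based_codes_codes by blast
      then have "drop (length d1') ((d1' @ [e]) @ c) \<in> C" by (rule codes_drop) simp
      then show ?thesis by simp
    qed
    have a1: "d1' @ (e # c) \<in> based_codes" using snoc.prems(2) by simp
    have a2: "d2' @ (e # c) \<in> based_codes" using snoc.prems(3) d2 by simp
    have "z ^ length d1' * \<nu> (P (d1' @ (e # c))) = z ^ length d2' * \<nu> (P (d2' @ (e # c)))"
      using snoc.IH[OF ec a1 a2] .
    then have "z * (z ^ length d1' * \<nu> (P (d1' @ (e # c)))) = z * (z ^ length d2' * \<nu> (P (d2' @ (e # c))))"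
      by simp
    then show ?thesis using d2 by (simp add: mult.assoc)
  next
    case False
    then have "d1' @ [e] = [] \<or> d2 = [] \<or> last (d1' @ [e]) \<noteq> last d2" by auto
    from scaled_value_eq_base[OF nu z snoc.prems(2) snoc.prems(3) snoc.prems(1) this] show ?thesis .
  qed
qed

definition invariant_lift :: "complex \<Rightarrow> ((nat \<Rightarrow> 'v \<times> 'v) set \<Rightarrow> complex) \<Rightarrow> ('v \<times> 'v) list \<Rightarrow> complex"
  where "invariant_lift z \<nu> c = (if c \<in> C then
    let d = (SOME d. d @ c \<in> based_codes) in z ^ length d * \<nu> (P (d @ c)) else 0)"

lemma invariant_lift_eq:
  assumes nu: "\<nu> \<in> FA_bd_inv adj v0 z" and z: "z \<noteq> 0" and c: "c \<in> C" and d: "d @ c \<in> based_codes"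
  shows "invariant_lift z \<nu> c = z ^ length d * \<nu> (P (d @ c))"
proof -
  have "(SOME d. d @ c \<in> based_codes) @ c \<in> based_codes"
    using code_based_extension[OF c] by (rule someI_ex)
  then show ?thesis using scaled_value_eq[OF nu z c _ d] c by (simp add: invariant_lift_def Let_def)
qed

lemma invariant_lift_FA_P:
  assumes nu: "\<nu> \<in> FA_bd_inv adj v0 z" and z: "z \<noteq> 0"
  shows "invariant_lift z \<nu> \<in> FA_P adj"
  unfolding FA_P_def
proof (intro CollectI conjI allI impI ballI)
  fix c assume "c \<notin> C" then show "invariant_lift z \<nu> c = 0" by (simp add: invariant_lift_def)
next
  fix c assume c: "c \<in> C"
  have nuFA: "\<nu> \<in> FA_bd adj v0" using nu by (simp add: FA_bd_inv_def)
  obtain d where d: "d @ c \<in> based_codes" using code_based_extension[OF c] by blast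
  have cne: "c \<noteq> []" using c by (simp add: codes_def)
  have "invariant_lift z \<nu> c = z ^ length d * \<nu> (P (d @ c))" using invariant_lift_eq[OF nu z c d] .
  also have "\<dots> = z ^ length d * (\<Sum>e\<in>{e. trn (last c) e}. \<nu> (P (d @ c @ [e])))"
    using FA_bd_district_split[OF nuFA d] cne by simp
  also have "\<dots> = (\<Sum>e\<in>{e. trn (last c) e}. invariant_lift z \<nu> (c @ [e]))"
    unfolding sum_distrib_left
  proof (rule sum.cong)
    fix e assume e: "e \<in> {e. trn (last c) e}"
    have ce: "c @ [e] \<in> C" using codes_snoc c e by blast
    have "(d @ c) @ [e] \<in> C" using codes_snoc[OF based_codes_codes[OF d]] e cne by simp
    then have "d @ (c @ [e]) \<in> based_codes" using d cne by (cases d) (auto simp: based_codes_def)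
    then show "z ^ length d * \<nu> (P (d @ c @ [e])) = invariant_lift z \<nu> (c @ [e])"
      using invariant_lift_eq[OF nu z ce] by simp
  qed simp
  finally show "invariant_lift z \<nu> c = (\<Sum>e\<in>{e. trn (last c) e}. invariant_lift z \<nu> (c @ [e]))" .
qed

lemma invariant_lift_eigenspace:
  assumes nu: "\<nu> \<in> FA_bd_inv adj v0 z" and z: "z \<noteq> 0"
  shows "invariant_lift z \<nu> \<in> eigenspace_P adj z"
  unfolding eigenspace_P_iff
proof (intro conjI ballI impI invariant_lift_FA_P[OF nu z])
  fix c assume c: "c \<in> C" and l: "2 \<le> length c"
  obtain d where d: "d @ c \<in> based_codes" using code_based_extension[OF c] by blast
  have cne: "c \<noteq> []" using c by (simp add: codes_def)
  then have "(d @ [hd c]) @ tl c = d @ c" by simp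
  then have "invariant_lift z \<nu> (tl c) = z ^ length (d @ [hd c]) * \<nu> (P (d @ c))"
    using invariant_lift_eq[OF nu z codes_tl[OF c l], of "d @ [hd c]"] d by simp
  then show "invariant_lift z \<nu> (tl c) = z * invariant_lift z \<nu> c"
    using invariant_lift_eq[OF nu z c d] by simp
qed

lemma Res_invariant_lift:
  assumes nu: "\<nu> \<in> FA_bd_inv adj v0 z" and z: "z \<noteq> 0"
  shows "Res adj v0 (invariant_lift z \<nu>) = \<nu>"
proof (rule Res_eqI)
  show "\<nu> \<in> FA_bd adj v0" using nu by (simp add: FA_bd_inv_def)
  show "\<forall>c\<in>based_codes. \<nu> (P c) = invariant_lift z \<nu> c"
    using invariant_lift_eq[OF nu z, of _ "[]"] based_codes_codes by simp
qed

lemma Res_image_eigenspace: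
  assumes "z \<noteq> 0"
  shows "Res adj v0 ` eigenspace_P adj z = FA_bd_inv adj v0 z"
proof
  show "Res adj v0 ` eigenspace_P adj z \<subseteq> FA_bd_inv adj v0 z"
    using Res_eigenspace_invariant[OF assms] by blast
  show "FA_bd_inv adj v0 z \<subseteq> Res adj v0 ` eigenspace_P adj z"
    using Res_invariant_lift[OF _ assms] invariant_lift_eigenspace[OF _ assms]
      by (metis image_eqI subsetI)
qed

end

theorem mainTheorem19:
  fixes V :: "'v set" and adj :: "'v \<Rightarrow> 'v \<Rightarrow> bool" and v0 :: 'v and z :: complex
  assumes "finite V"
    and "\<forall>u v. adj u v \<longrightarrow> u \<in> V \<and> v \<in> V"
    and "\<forall>u v. adj u v \<longrightarrow> adj v u"
    and "\<forall>u. \<not> adj u u"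
    and "\<forall>u\<in>V. \<forall>v\<in>V. (u, v) \<in> {(a, b). adj a b}\<^sup>*"
    and "\<forall>v\<in>V. card {w. adj v w} \<ge> 2"
    and "v0 \<in> V"
    and "z \<noteq> 0"
  shows "bij_betw (Res adj v0) (eigenspace_P adj z) (FA_bd_inv adj v0 z) \<and>
    (\<forall>\<mu>\<in>eigenspace_P adj z. \<forall>\<mu>'\<in>eigenspace_P adj z. \<forall>a b.
       Res adj v0 (\<lambda>c. a * \<mu> c + b * \<mu>' c) = (\<lambda>A. a * Res adj v0 \<mu> A + b * Res adj v0 \<mu>' A))"
proof -
  interpret based_graph V adj v0 using assms(1-3,5-7) by (simp add: based_graph_def)
  show ?thesis
    using inj_on_Res_eigenspace Res_image_eigenspace[OF assms(8)] Res_lincomb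
    by (simp add: bij_betw_def)
qed

end
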